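(* Let $q$ be an odd prime power, $\omega$ a non-square in $\mathbb F_q$, $\epsilon\in\mathbb F_{q^2}$ with $\epsilon^2=\omega$, and write $z=z_1+\epsilon z_2$ ($z_i\in\mathbb F_q$) for $z\in\mathbb F_{q^2}$. Let $\mathcal C: aX^2+bXY+cXZ+dYZ+eZ^2=0$ be a non-singular conic of $\mathrm{PG}(2,q^2)$ with $d=1$, $b\notin\mathbb F_q$, and $-bcd+ad^2+b^2e$ a nonzero square in $\mathbb F_{q^2}$. Put $A=-a_2b_1+a_1b_2$, $B=b_2c_1-b_1c_2-a_2d_1+a_1d_2$, $C=-c_2d_1+c_1d_2+b_2e_1-b_1e_2$, $D=d_2e_1-d_1e_2$, and let $\mathcal S\subset\mathrm{PG}(3,q)$ be the cubic surface in coordinates $(t_1:t_2:X:Z)$ with equation $$2t_1t_2(b_1X+d_1Z)-(t_1^2+\omega t_2^2)(b_2X+d_2Z)+AX^3+BX^2Z+CXZ^2+DZ^3=0.$$ Let $\mathcal S_q$ be the number of points of $\mathrm{PG}(3,q)$ on $\mathcal S$ and $n_0$ the number of those with $t_1=t_2=0$. Then $E_q(\mathcal C)=\frac12(\mathcal S_q-n_0-q-1)$.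
   Context: $E_q(\mathcal C)$ is the number of points of $\mathrm{PG}(2,q)$ (canonically embedded in $\mathrm{PG}(2,q^2)$) external to $\mathcal C$, i.e. lying on two tangent lines of $\mathcal C$. *)

theory Defs
  imports Main
begin

text \<open>The field F_{q^2} is represented, as in the paper, by pairs (z1,z2) of elements of F_q,
  standing for z = z1 + eps z2 with eps^2 = w (w a fixed non-square of F_q).\<close>

type_synonym 'a ext = "'a \<times> 'a"

definition ezero :: "'a::field ext" where "ezero = (0, 0)"

definition eadd :: "'a::field ext \<Rightarrow> 'a ext \<Rightarrow> 'a ext" where
  "eadd x y = (fst x + fst y, snd x + snd y)"

definition eneg :: "'a::field ext \<Rightarrow> 'a ext" where
  "eneg x = (- fst x, - snd x)"

definition emul :: "'a::field \<Rightarrow> 'a ext \<Rightarrow> 'a ext \<Rightarrow> 'a ext" where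
  "emul w x y = (fst x * fst y + w * snd x * snd y, fst x * snd y + snd x * fst y)"

definition zero3 :: "'a::field ext \<times> 'a ext \<times> 'a ext" where
  "zero3 = (ezero, ezero, ezero)"

definition smul3 :: "'a::field \<Rightarrow> 'a ext \<Rightarrow> 'a ext \<times> 'a ext \<times> 'a ext \<Rightarrow> 'a ext \<times> 'a ext \<times> 'a ext" where
  "smul3 w l v = (case v of (x, y, z) \<Rightarrow> (emul w l x, emul w l y, emul w l z))"

definition proj_pt2 :: "'a::field \<Rightarrow> 'a ext \<times> 'a ext \<times> 'a ext \<Rightarrow> ('a ext \<times> 'a ext \<times> 'a ext) set" where
  "proj_pt2 w v = {smul3 w l v | l. l \<noteq> ezero}"

definition PG2 :: "'a::field \<Rightarrow> ('a ext \<times> 'a ext \<times> 'a ext) set set" where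
  "PG2 w = {proj_pt2 w v | v. v \<noteq> zero3}"

definition dot3 :: "'a::field \<Rightarrow> 'a ext \<times> 'a ext \<times> 'a ext \<Rightarrow> 'a ext \<times> 'a ext \<times> 'a ext \<Rightarrow> 'a ext" where
  "dot3 w u v = (case u of (u1, u2, u3) \<Rightarrow> case v of (v1, v2, v3) \<Rightarrow>
      eadd (eadd (emul w u1 v1) (emul w u2 v2)) (emul w u3 v3))"

definition line2 :: "'a::field \<Rightarrow> 'a ext \<times> 'a ext \<times> 'a ext \<Rightarrow> ('a ext \<times> 'a ext \<times> 'a ext) set set" where
  "line2 w u = {P \<in> PG2 w. \<forall>v\<in>P. dot3 w u v = ezero}"

definition lines2 :: "'a::field \<Rightarrow> ('a ext \<times> 'a ext \<times> 'a ext) set set set" where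
  "lines2 w = {line2 w u | u. u \<noteq> zero3}"

definition conic_form :: "'a::field \<Rightarrow> 'a ext \<Rightarrow> 'a ext \<Rightarrow> 'a ext \<Rightarrow> 'a ext \<Rightarrow> 'a ext
    \<Rightarrow> 'a ext \<times> 'a ext \<times> 'a ext \<Rightarrow> 'a ext" where
  "conic_form w a b c d e v = (case v of (X, Y, Z) \<Rightarrow>
     eadd (eadd (eadd (eadd (emul w a (emul w X X)) (emul w b (emul w X Y)))
       (emul w c (emul w X Z))) (emul w d (emul w Y Z))) (emul w e (emul w Z Z)))"

definition conic_pts :: "'a::field \<Rightarrow> 'a ext \<Rightarrow> 'a ext \<Rightarrow> 'a ext \<Rightarrow> 'a ext \<Rightarrow> 'a ext
    \<Rightarrow> ('a ext \<times> 'a ext \<times> 'a ext) set set" where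
  "conic_pts w a b c d e = {P \<in> PG2 w. \<forall>v\<in>P. conic_form w a b c d e v = ezero}"

definition conic_nonsingular :: "'a::field \<Rightarrow> 'a ext \<Rightarrow> 'a ext \<Rightarrow> 'a ext \<Rightarrow> 'a ext \<Rightarrow> 'a ext \<Rightarrow> bool" where
  "conic_nonsingular w a b c d e \<longleftrightarrow>
     \<not> (\<exists>X Y Z. (X, Y, Z) \<noteq> zero3 \<and>
          eadd (eadd (emul w (2, 0) (emul w a X)) (emul w b Y)) (emul w c Z) = ezero \<and>
          eadd (emul w b X) (emul w d Z) = ezero \<and>
          eadd (eadd (emul w c X) (emul w d Y)) (emul w (2, 0) (emul w e Z)) = ezero)"

definition tangent_lines :: "'a::field \<Rightarrow> 'a ext \<Rightarrow> 'a ext \<Rightarrow> 'a ext \<Rightarrow> 'a ext \<Rightarrow> 'a ext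
    \<Rightarrow> ('a ext \<times> 'a ext \<times> 'a ext) set set set" where
  "tangent_lines w a b c d e = {L \<in> lines2 w. card (L \<inter> conic_pts w a b c d e) = 1}"

text \<open>Points of PG(2,q) canonically embedded: those with a representative over F_q.\<close>
definition in_PG2_q :: "('a::field ext \<times> 'a ext \<times> 'a ext) set \<Rightarrow> bool" where
  "in_PG2_q P \<longleftrightarrow> (\<exists>v\<in>P. snd (fst v) = 0 \<and> snd (fst (snd v)) = 0 \<and> snd (snd (snd v)) = 0)"

definition E_q :: "'a::field \<Rightarrow> 'a ext \<Rightarrow> 'a ext \<Rightarrow> 'a ext \<Rightarrow> 'a ext \<Rightarrow> 'a ext \<Rightarrow> nat" where
  "E_q w a b c d e = card {P \<in> PG2 w. in_PG2_q P \<and>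
      card {L \<in> tangent_lines w a b c d e. P \<in> L} = 2}"

definition PG3 :: "('a::field \<times> 'a \<times> 'a \<times> 'a) set set" where
  "PG3 = {{(l * t1, l * t2, l * x, l * z) | l. l \<noteq> 0} | t1 t2 x z.
            (t1, t2, x, z) \<noteq> (0, 0, 0, 0)}"

definition surf_eq :: "'a::field \<Rightarrow> 'a ext \<Rightarrow> 'a ext \<Rightarrow> 'a ext \<Rightarrow> 'a ext \<Rightarrow> 'a ext
    \<Rightarrow> 'a \<Rightarrow> 'a \<Rightarrow> 'a \<Rightarrow> 'a \<Rightarrow> 'a" where
  "surf_eq w a b c d e t1 t2 X Z =
    (let a1 = fst a; a2 = snd a; b1 = fst b; b2 = snd b; c1 = fst c; c2 = snd c;
         d1 = fst d; d2 = snd d; e1 = fst e; e2 = snd e;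
         A = - a2 * b1 + a1 * b2;
         B = b2 * c1 - b1 * c2 - a2 * d1 + a1 * d2;
         C = - c2 * d1 + c1 * d2 + b2 * e1 - b1 * e2;
         D = d2 * e1 - d1 * e2
     in 2 * t1 * t2 * (b1 * X + d1 * Z) - (t1^2 + w * t2^2) * (b2 * X + d2 * Z)
        + A * X^3 + B * X^2 * Z + C * X * Z^2 + D * Z^3)"

definition surf_pts :: "'a::field \<Rightarrow> 'a ext \<Rightarrow> 'a ext \<Rightarrow> 'a ext \<Rightarrow> 'a ext \<Rightarrow> 'a ext
    \<Rightarrow> ('a \<times> 'a \<times> 'a \<times> 'a) set set" where
  "surf_pts w a b c d e = {P \<in> PG3. \<forall>(t1, t2, X, Z)\<in>P. surf_eq w a b c d e t1 t2 X Z = 0}"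

definition surf_pts0 :: "'a::field \<Rightarrow> 'a ext \<Rightarrow> 'a ext \<Rightarrow> 'a ext \<Rightarrow> 'a ext \<Rightarrow> 'a ext
    \<Rightarrow> ('a \<times> 'a \<times> 'a \<times> 'a) set set" where
  "surf_pts0 w a b c d e = {P \<in> surf_pts w a b c d e. \<forall>(t1, t2, X, Z)\<in>P. t1 = 0 \<and> t2 = 0}"

end

theory Submission
  imports Defs
begin

text \<open>A point P = [v] of PG(2,q^2) lies on 0, 1 or 2 tangents of C according as Q(v) is a
  non-square, zero, or a nonzero square of F_q^2, Q being the quadratic form of C. To see this,
  change coordinates to (\<delta> X, Y + (c - e b) X + e Z, b X + Z), with \<delta>^2 = a - b c + b^2 e, which
  turns C into Y1^2 + Y2 Y3 = 0 and its dual into Y1^2 + 4 Y2 Y3 = 0; counting the points of a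
  line on such a conic, or the tangents through a point, is then counting the zeros of a binary
  quadratic form whose discriminant is Q(v) up to a nonzero square factor. Hence
  (q - 1) E_q(C) is the number of nonzero r \<in> F_q^3 with Q(r) a nonzero square.

  For r = (X, Y, Z) with (X, Z) \<noteq> 0 we have Q(r) = Y (b X + Z) + K(X, Z) with b X + Z \<noteq> 0, as
  b \<notin> F_q. The equation of S at (t1, t2, X, Z) says precisely that (t^2 - K)/(b X + Z) \<in> F_q for
  t = t1 + \<epsilon> t2, i.e. that t^2 = Q(X, Y, Z) for a unique Y \<in> F_q. So the nonzero vectors of S
  with t \<noteq> 0 and (X, Z) \<noteq> 0 correspond to pairs (r, t) with t a nonzero square root of Q(r), of
  which there are 2 (q - 1) E_q(C); those with t \<noteq> 0 and X = Z = 0 are the q^2 - 1 vectors of a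
  line lying on S. Counting the nonzero vectors of S and dividing by q - 1 gives
  S_q = n_0 + q + 1 + 2 E_q(C).\<close>

lemma card_image_mult_fibre_card:
  assumes "finite V" and "\<And>v. v \<in> V \<Longrightarrow> card {v' \<in> V. f v' = f v} = k"
  shows "card (f ` V) * k = card V"
proof -
  have "card V = card (\<Union>y\<in>f ` V. {v \<in> V. f v = y})"
    by (rule arg_cong[where f = card]) auto
  also have "\<dots> = (\<Sum>y\<in>f ` V. card {v \<in> V. f v = y})"
    by (rule card_UN_disjoint) (use assms(1) in auto)
  also have "\<dots> = (\<Sum>y\<in>f ` V. k)"
    using assms(2) by (intro sum.cong) auto
  finally show ?thesis by simp
qed

lemma card_Collect_comp_bij:
  assumes "bij f" shows "card {v. P (f v)} = card {x. P x}"
  using card_vimage_inj[of f "{x. P x}"] assms by (simp add: bij_def vimage_def)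

lemma finite_inj_imp_bij: "inj (f :: 'a::finite \<Rightarrow> 'a) \<Longrightarrow> bij f"
  using finite_UNIV_inj_surj[of f] by (simp add: bij_def)

section \<open>Arithmetic of F_q(\<epsilon>)\<close>

lemmas ext_defs = emul_def eadd_def eneg_def ezero_def

notation eadd (infixl "\<oplus>" 65)

lemma eadd_zero [simp]: "x \<oplus> ezero = x" "ezero \<oplus> x = x"
  by (auto simp: ext_defs)

lemma eneg_zero [simp]: "eneg ezero = ezero"
  by (simp add: ext_defs)

lemma eadd_eneg_eq_zero_iff: "x \<oplus> eneg y = ezero \<longleftrightarrow> x = y"
  by (auto simp: ext_defs prod_eq_iff)

lemma eadd_eq_zero_iff: "x \<oplus> y = ezero \<longleftrightarrow> x = eneg y"
  by (auto simp: ext_defs prod_eq_iff eq_neg_iff_add_eq_0)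

lemma eadd_left_cancel: "z \<oplus> x = z \<oplus> y \<longleftrightarrow> x = y"
  by (auto simp: ext_defs prod_eq_iff)

lemma eadd_right_cancel: "x \<oplus> z = y \<oplus> z \<longleftrightarrow> x = y"
  by (auto simp: ext_defs prod_eq_iff)

locale quadratic_ext =
  fixes w :: "'a::{finite,field}"
  assumes nonsquare: "\<nexists>x. x * x = w"
begin

abbreviation emul_w :: "'a ext \<Rightarrow> 'a ext \<Rightarrow> 'a ext" (infixl "\<otimes>" 70)
  where "x \<otimes> y \<equiv> emul w x y"

text \<open>In characteristic 2 squaring is injective, hence onto on a finite field: the non-square w
  forces odd characteristic.\<close>
lemma two_nonzero: "(2::'a) \<noteq> 0"
proof
  assume two: "(2::'a) = 0"
  have "inj (\<lambda>x::'a. x * x)"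
  proof (rule injI)
    fix x y :: 'a
    assume "x * x = y * y"
    then have "(x - y) * (x - y) = 2 * (x * x) - 2 * (x * y)" by algebra
    then have "x - y = 0" using two by simp
    then show "x = y" by simp
  qed
  then have "surj (\<lambda>x::'a. x * x)" using finite_UNIV_inj_surj finite_UNIV by blast
  then have "\<exists>x. w = x * x" by (simp add: surj_def)
  then show False using nonsquare by auto
qed

lemma self_eq_neg_iff: "(x::'a) = - x \<longleftrightarrow> x = 0"
proof
  assume "x = - x"
  then have "x + x = 0" by (metis add.right_inverse)
  then have "2 * x = 0" by (simp only: mult_2)
  then show "x = 0" using two_nonzero by simp
qed simp

lemma norm_nonzero:
  assumes "x \<noteq> ezero" shows "fst x * fst x - w * (snd x * snd x) \<noteq> 0"
proof
  assume norm: "fst x * fst x - w * (snd x * snd x) = 0"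
  show False
  proof (cases "snd x = 0")
    case True
    then show False using norm assms by (cases x) (simp add: ezero_def)
  next
    case False
    then have "(fst x / snd x) * (fst x / snd x) = w" using norm by (simp add: field_simps)
    then show False using nonsquare by blast
  qed
qed

definition einv :: "'a ext \<Rightarrow> 'a ext" where
  "einv x = (let n = fst x * fst x - w * (snd x * snd x) in (fst x / n, - snd x / n))"

lemma einv_emul:
  assumes "x \<noteq> ezero" shows "einv x \<otimes> x = (1, 0)"
proof -
  define n where "n = fst x * fst x - w * (snd x * snd x)"
  have "n \<noteq> 0" using norm_nonzero[OF assms] n_def by simp
  moreover have "fst x / n * fst x + w * (- snd x / n) * snd x = n / n"
    unfolding n_def by (simp add: field_simps)
  moreover have "fst x / n * snd x + - snd x / n * fst x = 0"
    by (simp add: field_simps)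
  ultimately show ?thesis unfolding einv_def emul_def Let_def n_def[symmetric] by simp
qed

lemma emul_commute: "x \<otimes> y = y \<otimes> x"
  by (simp add: emul_def algebra_simps)

lemma emul_assoc: "x \<otimes> y \<otimes> z = x \<otimes> (y \<otimes> z)"
  unfolding emul_def by (simp add: prod_eq_iff; algebra)

lemma emul_left_commute: "x \<otimes> (y \<otimes> z) = y \<otimes> (x \<otimes> z)"
  unfolding emul_def by (simp add: prod_eq_iff; algebra)

lemmas emul_ac = emul_assoc emul_commute emul_left_commute

lemma emul_one [simp]: "(1, 0) \<otimes> x = x" "x \<otimes> (1, 0) = x"
  by (simp_all add: emul_def)

lemma emul_zero [simp]: "ezero \<otimes> x = ezero" "x \<otimes> ezero = ezero"
  by (simp_all add: ext_defs)

lemma einv_emul_cancel: "l \<noteq> ezero \<Longrightarrow> einv l \<otimes> (l \<otimes> x) = x"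
  by (simp add: emul_assoc[symmetric] einv_emul)

lemma emul_eq_zero_iff [simp]: "x \<otimes> y = ezero \<longleftrightarrow> x = ezero \<or> y = ezero"
proof
  assume xy: "x \<otimes> y = ezero"
  show "x = ezero \<or> y = ezero"
  proof (cases "x = ezero")
    case False
    then have "y = einv x \<otimes> (x \<otimes> y)" by (simp add: einv_emul_cancel)
    then show ?thesis using xy by simp
  qed simp
qed auto

lemma einv_nonzero: "l \<noteq> ezero \<Longrightarrow> einv l \<noteq> ezero"
  using einv_emul[of l] by (auto simp: ezero_def emul_def)

lemma emul_left_cancel: "l \<noteq> ezero \<Longrightarrow> l \<otimes> x = l \<otimes> y \<longleftrightarrow> x = y"
  by (metis einv_emul_cancel)

lemma emul_right_cancel: "l \<noteq> ezero \<Longrightarrow> x \<otimes> l = y \<otimes> l \<longleftrightarrow> x = y"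
  by (metis einv_emul_cancel emul_commute)

lemma emul_square: "(l \<otimes> m) \<otimes> (l \<otimes> m) = (l \<otimes> l) \<otimes> (m \<otimes> m)"
  by (simp add: emul_ac)

lemma scalar_nonzero [simp]: "((k::'a), (0::'a)) = ezero \<longleftrightarrow> k = 0"
  by (simp add: ezero_def)

lemma card_ext_nonzero: "card {t :: 'a ext. t \<noteq> ezero} = card (UNIV :: 'a ext set) - 1"
proof -
  have "{t :: 'a ext. t \<noteq> ezero} = UNIV - {ezero}" by auto
  then show ?thesis by (simp add: card_Diff_singleton)
qed

lemma card_units_pos: "card (UNIV :: 'a ext set) - 1 > 0"
proof -
  have "card {ezero :: 'a ext, (1, 0)} \<le> card (UNIV :: 'a ext set)"
    by (rule card_mono) simp_all
  then show ?thesis by (simp add: ezero_def)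
qed

definition nsqrt :: "'a ext \<Rightarrow> nat" where
  "nsqrt x = card {s. s \<otimes> s = x}"

lemma square_eq_square_iff: "t \<otimes> t = s \<otimes> s \<longleftrightarrow> t = s \<or> t = eneg s"
proof -
  have "(t \<oplus> eneg s) \<otimes> (t \<oplus> s) = t \<otimes> t \<oplus> eneg (s \<otimes> s)"
    by (simp add: ext_defs prod_eq_iff; algebra)
  then show ?thesis
    by (metis eadd_eneg_eq_zero_iff eadd_eq_zero_iff emul_eq_zero_iff)
qed

lemma eneg_neq_self:
  assumes "(s :: 'a ext) \<noteq> ezero" shows "eneg s \<noteq> s"
proof
  obtain x y where s: "s = (x, y)" by (cases s)
  assume "eneg s = s"
  then have "x = - x" "y = - y" by (simp_all add: eneg_def s)
  then have "x = 0" "y = 0" by (simp_all only: self_eq_neg_iff)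
  then show False using assms s by (simp add: ezero_def)
qed

lemma nsqrt_square: "s \<noteq> ezero \<Longrightarrow> nsqrt (s \<otimes> s) = 2"
proof -
  assume "s \<noteq> ezero"
  moreover have "{t. t \<otimes> t = s \<otimes> s} = {s, eneg s}"
    using square_eq_square_iff[of _ s] by blast
  ultimately show ?thesis
    unfolding nsqrt_def using eneg_neq_self[of s] by (simp add: card_insert_if)
qed

lemma nsqrt_zero: "nsqrt ezero = 1"
proof -
  have "{t. t \<otimes> t = ezero} = {ezero}" by auto
  then show ?thesis by (simp add: nsqrt_def)
qed

lemma nsqrt_nonsquare: "\<nexists>s. s \<otimes> s = x \<Longrightarrow> nsqrt x = 0"
  by (simp add: nsqrt_def)

lemma nsqrt_nonzero:
  assumes "x \<noteq> ezero" shows "nsqrt x = 0 \<or> nsqrt x = 2"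
proof (cases "\<exists>s. s \<otimes> s = x")
  case True
  then obtain s where s: "s \<otimes> s = x" by blast
  then have "s \<noteq> ezero" using assms by auto
  then show ?thesis using nsqrt_square[of s] s by simp
qed (simp add: nsqrt_nonsquare)

lemma nsqrt_eq_1_iff: "nsqrt x = 1 \<longleftrightarrow> x = ezero"
proof (cases "x = ezero")
  case False
  then show ?thesis using nsqrt_nonzero[OF False] by auto
qed (simp add: nsqrt_zero)

lemma nsqrt_scale:
  assumes l: "l \<noteq> ezero" shows "nsqrt ((l \<otimes> l) \<otimes> x) = nsqrt x"
proof -
  have "{t. t \<otimes> t = (l \<otimes> l) \<otimes> x} = (\<lambda>s. l \<otimes> s) ` {s. s \<otimes> s = x}"
  proof (intro equalityI subsetI)
    fix t assume t: "t \<in> {t. t \<otimes> t = (l \<otimes> l) \<otimes> x}"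
    define s where "s = einv l \<otimes> t"
    have ls: "l \<otimes> s = t"
      using l unfolding s_def by (metis einv_emul emul_assoc emul_commute emul_one(1))
    then have "(l \<otimes> l) \<otimes> (s \<otimes> s) = (l \<otimes> l) \<otimes> x"
      using t emul_square[of l s] by simp
    then have "s \<otimes> s = x" using l emul_left_cancel[of "l \<otimes> l"] by simp
    then show "t \<in> (\<lambda>s. l \<otimes> s) ` {s. s \<otimes> s = x}" using ls by blast
  next
    fix t assume "t \<in> (\<lambda>s. l \<otimes> s) ` {s. s \<otimes> s = x}"
    then obtain s where "s \<otimes> s = x" "t = l \<otimes> s" by blast
    then show "t \<in> {t. t \<otimes> t = (l \<otimes> l) \<otimes> x}" using emul_square[of l s] by simp
  qed
  moreover have "inj_on (\<lambda>s. l \<otimes> s) {s. s \<otimes> s = x}"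
    using emul_left_cancel[OF l] by (auto simp: inj_on_def)
  ultimately show ?thesis unfolding nsqrt_def by (simp add: card_image)
qed

lemma card_nonzero_sqrts:
  "card {t. t \<noteq> ezero \<and> t \<otimes> t = x} = (if nsqrt x = 2 then 2 else 0)"
proof (cases "x = ezero")
  case True
  then show ?thesis by (simp add: nsqrt_zero)
next
  case False
  then have "{t. t \<noteq> ezero \<and> t \<otimes> t = x} = {t. t \<otimes> t = x}" by auto
  then have "card {t. t \<noteq> ezero \<and> t \<otimes> t = x} = nsqrt x" by (simp add: nsqrt_def)
  then show ?thesis using nsqrt_nonzero[OF False] by auto
qed

section \<open>Binary quadratic forms\<close>

definition bq :: "'a ext \<Rightarrow> 'a ext \<Rightarrow> 'a ext \<Rightarrow> 'a ext \<times> 'a ext \<Rightarrow> 'a ext" where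
  "bq A B C p = A \<otimes> (fst p \<otimes> fst p) \<oplus> B \<otimes> (fst p \<otimes> snd p) \<oplus> C \<otimes> (snd p \<otimes> snd p)"

definition disc :: "'a ext \<Rightarrow> 'a ext \<Rightarrow> 'a ext \<Rightarrow> 'a ext" where
  "disc A B C = B \<otimes> B \<oplus> eneg ((4, 0) \<otimes> (A \<otimes> C))"

lemma card_sqrt_multiples:
  "card {p. snd p \<noteq> ezero \<and> fst p \<otimes> fst p = D \<otimes> (snd p \<otimes> snd p)}
     = nsqrt D * (card (UNIV :: 'a ext set) - 1)"
proof -
  let ?f = "\<lambda>q. (fst q \<otimes> snd q, snd q)"
  let ?R = "{r. r \<otimes> r = D} \<times> {t. t \<noteq> ezero}"
  have "{p. snd p \<noteq> ezero \<and> fst p \<otimes> fst p = D \<otimes> (snd p \<otimes> snd p)} = ?f ` ?R"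
  proof (intro equalityI subsetI)
    fix p assume p: "p \<in> {p. snd p \<noteq> ezero \<and> fst p \<otimes> fst p = D \<otimes> (snd p \<otimes> snd p)}"
    define r where "r = fst p \<otimes> einv (snd p)"
    have rt: "r \<otimes> snd p = fst p"
      using p unfolding r_def by (simp add: emul_assoc einv_emul)
    have "(snd p \<otimes> snd p) \<otimes> (r \<otimes> r) = (r \<otimes> r) \<otimes> (snd p \<otimes> snd p)"
      by (rule emul_commute)
    also have "\<dots> = fst p \<otimes> fst p" using rt emul_square[of r "snd p"] by simp
    also have "\<dots> = (snd p \<otimes> snd p) \<otimes> D" using p emul_commute[of D] by simp
    finally have "r \<otimes> r = D" using p emul_left_cancel[of "snd p \<otimes> snd p"] by simp
    then have "(r, snd p) \<in> ?R" using p by simp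
    moreover have "p = ?f (r, snd p)" using rt by simp
    ultimately show "p \<in> ?f ` ?R" by blast
  next
    fix p assume "p \<in> ?f ` ?R"
    then obtain q where "fst q \<otimes> fst q = D" "snd q \<noteq> ezero" "p = ?f q" by auto
    then show "p \<in> {p. snd p \<noteq> ezero \<and> fst p \<otimes> fst p = D \<otimes> (snd p \<otimes> snd p)}"
      using emul_square[of "fst q" "snd q"] by simp
  qed
  moreover have "inj_on ?f ?R"
  proof (rule inj_onI)
    fix q q' assume q: "q \<in> ?R" and f: "?f q = ?f q'"
    then have nz: "snd q \<noteq> ezero" by auto
    from f have eqs: "fst q \<otimes> snd q = fst q' \<otimes> snd q'" "snd q = snd q'"
      by (meson prod.inject)+
    then have "fst q \<otimes> snd q = fst q' \<otimes> snd q" by simp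
    then have "fst q = fst q'" using emul_right_cancel[OF nz] by simp
    with eqs(2) show "q = q'" by (simp add: prod_eq_iff)
  qed
  ultimately show ?thesis
    by (simp add: card_image card_cartesian_product card_ext_nonzero nsqrt_def)
qed

text \<open>Completing the square, (2 A p1 + B p2)^2 = 4 A bq(p) + disc p2^2.\<close>
lemma card_bq_zeros:
  assumes A: "A \<noteq> ezero"
  shows "card {p. p \<noteq> (ezero, ezero) \<and> bq A B C p = ezero} = (card (UNIV :: 'a ext set) - 1) * nsqrt (disc A B C)"
proof -
  let ?S = "{p. p \<noteq> (ezero, ezero) \<and> bq A B C p = ezero}"
  let ?T = "{p. snd p \<noteq> ezero \<and> fst p \<otimes> fst p = disc A B C \<otimes> (snd p \<otimes> snd p)}"
  have A2: "(2, 0) \<otimes> A \<noteq> ezero" using A two_nonzero by simp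
  have "card ?S \<le> card ?T"
  proof (rule card_inj_on_le)
    let ?f = "\<lambda>p. ((2, 0) \<otimes> (A \<otimes> fst p) \<oplus> B \<otimes> snd p, snd p)"
    show "inj_on ?f ?S"
    proof (rule inj_onI)
      fix p p' assume f: "?f p = ?f p'"
      then have snd_eq: "snd p = snd p'" by simp
      with f have "((2, 0) \<otimes> A) \<otimes> fst p = ((2, 0) \<otimes> A) \<otimes> fst p'"
        by (simp add: eadd_right_cancel emul_assoc)
      then show "p = p'" using A2 emul_left_cancel snd_eq by (simp add: prod_eq_iff)
    qed
    show "?f ` ?S \<subseteq> ?T"
    proof
      fix x assume "x \<in> ?f ` ?S"
      then obtain y where y: "y \<in> ?S" and x: "x = ?f y" by blast
      obtain y1 y2 where y12: "y = (y1, y2)" by (cases y)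
      have p: "(y1, y2) \<noteq> (ezero, ezero)" "bq A B C (y1, y2) = ezero" using y y12 by auto
      have square: "((2, 0) \<otimes> (A \<otimes> y1) \<oplus> B \<otimes> y2) \<otimes> ((2, 0) \<otimes> (A \<otimes> y1) \<oplus> B \<otimes> y2)
          = ((4, 0) \<otimes> A) \<otimes> bq A B C (y1, y2) \<oplus> disc A B C \<otimes> (y2 \<otimes> y2)"
        unfolding bq_def disc_def by (simp add: ext_defs prod_eq_iff; algebra)
      have "y2 \<noteq> ezero"
      proof
        assume "y2 = ezero"
        then have "A \<otimes> (y1 \<otimes> y1) = ezero" using p by (simp add: bq_def)
        then show False using A p \<open>y2 = ezero\<close> by simp
      qed
      then show "x \<in> ?T" using p x y12 square by simp
    qed
  qed simp
  moreover have "card ?T \<le> card ?S"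
  proof (rule card_inj_on_le)
    let ?g = "\<lambda>p. (fst p \<oplus> eneg (B \<otimes> snd p), (2, 0) \<otimes> (A \<otimes> snd p))"
    show "inj_on ?g ?T"
    proof (rule inj_onI)
      fix p p' assume g: "?g p = ?g p'"
      then have "((2, 0) \<otimes> A) \<otimes> snd p = ((2, 0) \<otimes> A) \<otimes> snd p'"
        by (simp add: emul_assoc)
      then have snd_eq: "snd p = snd p'" using A2 emul_left_cancel by blast
      with g have "fst p = fst p'" by (simp add: eadd_right_cancel)
      with snd_eq show "p = p'" by (simp add: prod_eq_iff)
    qed
    show "?g ` ?T \<subseteq> ?S"
    proof
      fix x assume "x \<in> ?g ` ?T"
      then obtain y where y: "y \<in> ?T" and x: "x = ?g y" by blast
      obtain s t where st: "y = (s, t)" by (cases y)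
      have p: "t \<noteq> ezero" "s \<otimes> s = disc A B C \<otimes> (t \<otimes> t)" using y st by auto
      have "bq A B C (s \<oplus> eneg (B \<otimes> t), (2, 0) \<otimes> (A \<otimes> t))
          = A \<otimes> (s \<otimes> s \<oplus> eneg (disc A B C \<otimes> (t \<otimes> t)))"
        unfolding bq_def disc_def by (simp add: ext_defs prod_eq_iff; algebra)
      then show "x \<in> ?S"
        using p x st A two_nonzero by (simp add: eadd_eneg_eq_zero_iff)
    qed
  qed simp
  ultimately show ?thesis using card_sqrt_multiples[of "disc A B C"] by (simp add: mult.commute)
qed

end

section \<open>The projective plane PG(2,q^2)\<close>

lemma smul3_simp [simp]: "smul3 w l (x, y, z) = (emul w l x, emul w l y, emul w l z)"
  by (simp add: smul3_def)

lemma dot3_simp [simp]: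
  "dot3 w (u1, u2, u3) (v1, v2, v3) = emul w u1 v1 \<oplus> emul w u2 v2 \<oplus> emul w u3 v3"
  by (simp add: dot3_def)

context quadratic_ext
begin

lemma smul3_one [simp]: "smul3 w (1, 0) v = v"
  by (cases v) simp

lemma smul3_smul3: "smul3 w l (smul3 w m v) = smul3 w (l \<otimes> m) v"
  by (cases v) (simp add: emul_assoc)

lemma smul3_eq_zero_iff [simp]: "smul3 w l v = zero3 \<longleftrightarrow> l = ezero \<or> v = zero3"
  by (cases v) (auto simp: zero3_def)

lemma smul3_inj: "v \<noteq> zero3 \<Longrightarrow> smul3 w l v = smul3 w m v \<Longrightarrow> l = m"
  by (cases v) (auto simp: zero3_def emul_right_cancel)

lemma mem_proj_pt2_iff: "v' \<in> proj_pt2 w v \<longleftrightarrow> (\<exists>l. l \<noteq> ezero \<and> v' = smul3 w l v)"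
  by (auto simp: proj_pt2_def)

lemma smul3_mem_proj_pt2: "l \<noteq> ezero \<Longrightarrow> smul3 w l v \<in> proj_pt2 w v"
  unfolding proj_pt2_def by blast

lemma proj_pt2E:
  assumes "v' \<in> proj_pt2 w v"
  obtains l where "l \<noteq> ezero" "v' = smul3 w l v"
  using assms by (auto simp: proj_pt2_def)

lemma proj_pt2_self: "v \<in> proj_pt2 w v"
  using smul3_mem_proj_pt2[of "(1, 0)" v] by simp

lemma proj_pt2_eq:
  assumes "v' \<in> proj_pt2 w v" shows "proj_pt2 w v' = proj_pt2 w v"
proof -
  obtain l where l: "l \<noteq> ezero" "v' = smul3 w l v" using assms by (rule proj_pt2E)
  show ?thesis
  proof (intro equalityI subsetI)
    fix x assume "x \<in> proj_pt2 w v'"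
    then obtain m where "m \<noteq> ezero" "x = smul3 w m v'" by (rule proj_pt2E)
    then show "x \<in> proj_pt2 w v"
      using l smul3_mem_proj_pt2[of "m \<otimes> l" v] by (simp add: smul3_smul3)
  next
    fix x assume "x \<in> proj_pt2 w v"
    then obtain m where m: "m \<noteq> ezero" "x = smul3 w m v" by (rule proj_pt2E)
    have "(m \<otimes> einv l) \<otimes> l = m" using l(1) by (simp add: emul_assoc einv_emul)
    then have "x = smul3 w (m \<otimes> einv l) v'" using m l by (simp add: smul3_smul3)
    moreover have "m \<otimes> einv l \<noteq> ezero" using m(1) einv_nonzero[OF l(1)] by simp
    ultimately show "x \<in> proj_pt2 w v'" using smul3_mem_proj_pt2 by metis
  qed
qed

lemma proj_pt2_eq_iff: "proj_pt2 w v' = proj_pt2 w v \<longleftrightarrow> v' \<in> proj_pt2 w v"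
  using proj_pt2_eq proj_pt2_self by metis

lemma mem_proj_pt2_if_smul3_eq:
  assumes "m \<noteq> ezero" "l \<noteq> ezero" "smul3 w m u' = smul3 w l u"
  shows "u' \<in> proj_pt2 w u"
proof -
  have "u' = smul3 w (einv m) (smul3 w m u')"
    using assms(1) by (simp add: smul3_smul3 einv_emul)
  also have "\<dots> = smul3 w (einv m \<otimes> l) u" using assms(3) by (simp add: smul3_smul3)
  finally show ?thesis
    using einv_nonzero[OF assms(1)] assms(2) smul3_mem_proj_pt2[of "einv m \<otimes> l" u] by simp
qed

lemma card_proj_pt2:
  assumes "v \<noteq> zero3" shows "card (proj_pt2 w v) = card (UNIV :: 'a ext set) - 1"
proof -
  have "proj_pt2 w v = (\<lambda>l. smul3 w l v) ` {l. l \<noteq> ezero}" by (auto simp: proj_pt2_def)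
  moreover have "inj_on (\<lambda>l. smul3 w l v) {l. l \<noteq> ezero}"
    using smul3_inj[OF assms] by (auto simp: inj_on_def)
  ultimately show ?thesis by (simp add: card_image card_ext_nonzero)
qed

lemma proj_pt2_in_PG2: "v \<noteq> zero3 \<Longrightarrow> proj_pt2 w v \<in> PG2 w"
  unfolding PG2_def by blast

lemma card_PG2_Collect:
  assumes inv: "\<And>l v. l \<noteq> ezero \<Longrightarrow> \<phi> (smul3 w l v) = \<phi> v"
  shows "card {P \<in> PG2 w. \<forall>v\<in>P. \<phi> v} * (card (UNIV :: 'a ext set) - 1)
           = card {v. v \<noteq> zero3 \<and> \<phi> v}"
proof -
  let ?V = "{v. v \<noteq> zero3 \<and> \<phi> v}"
  have "{P \<in> PG2 w. \<forall>v\<in>P. \<phi> v} = proj_pt2 w ` ?V"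
  proof (intro equalityI subsetI)
    fix P assume "P \<in> {P \<in> PG2 w. \<forall>v\<in>P. \<phi> v}"
    then show "P \<in> proj_pt2 w ` ?V" using proj_pt2_self by (fastforce simp: PG2_def)
  next
    fix P assume "P \<in> proj_pt2 w ` ?V"
    then obtain v where v: "v \<noteq> zero3" "\<phi> v" "P = proj_pt2 w v" by auto
    have "\<phi> x" if "x \<in> P" for x
    proof -
      from that obtain l where "l \<noteq> ezero" "x = smul3 w l v" unfolding v(3) by (rule proj_pt2E)
      then show ?thesis using inv v(2) by simp
    qed
    then show "P \<in> {P \<in> PG2 w. \<forall>v\<in>P. \<phi> v}" using v proj_pt2_in_PG2[of v] by blast
  qed
  moreover have "card (proj_pt2 w ` ?V) * (card (UNIV :: 'a ext set) - 1) = card ?V"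
  proof (rule card_image_mult_fibre_card)
    fix v assume v: "v \<in> ?V"
    have "{v' \<in> ?V. proj_pt2 w v' = proj_pt2 w v} = proj_pt2 w v"
    proof (intro equalityI subsetI)
      fix x assume "x \<in> proj_pt2 w v"
      then obtain l where "l \<noteq> ezero" "x = smul3 w l v" by (rule proj_pt2E)
      moreover have "proj_pt2 w x = proj_pt2 w v" using \<open>x \<in> proj_pt2 w v\<close> by (rule proj_pt2_eq)
      ultimately show "x \<in> {v' \<in> ?V. proj_pt2 w v' = proj_pt2 w v}" using v inv by simp
    qed (auto simp: proj_pt2_eq_iff)
    then show "card {v' \<in> ?V. proj_pt2 w v' = proj_pt2 w v} = card (UNIV :: 'a ext set) - 1"
      using card_proj_pt2 v by simp
  qed simp
  ultimately show ?thesis by simp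
qed

lemma dot3_smul3_right: "dot3 w u (smul3 w l v) = l \<otimes> dot3 w u v"
proof -
  obtain u1 u2 u3 v1 v2 v3 where uv: "u = (u1, u2, u3)" "v = (v1, v2, v3)" by (metis prod_cases3)
  show ?thesis unfolding uv by (simp add: ext_defs prod_eq_iff; algebra)
qed

lemma dot3_smul3_left: "dot3 w (smul3 w l u) v = l \<otimes> dot3 w u v"
proof -
  obtain u1 u2 u3 v1 v2 v3 where uv: "u = (u1, u2, u3)" "v = (v1, v2, v3)" by (metis prod_cases3)
  show ?thesis unfolding uv by (simp add: ext_defs prod_eq_iff; algebra)
qed

lemma dot3_commute: "dot3 w u v = dot3 w v u"
proof -
  obtain u1 u2 u3 v1 v2 v3 where uv: "u = (u1, u2, u3)" "v = (v1, v2, v3)" by (metis prod_cases3)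
  show ?thesis unfolding uv by (simp add: ext_defs prod_eq_iff; algebra)
qed

lemma dot3_zero_right [simp]: "dot3 w u zero3 = ezero"
  by (cases u) (simp add: zero3_def ext_defs)

lemma proj_pt2_mem_line2_iff:
  assumes "v \<noteq> zero3" shows "proj_pt2 w v \<in> line2 w u \<longleftrightarrow> dot3 w u v = ezero"
proof
  assume "proj_pt2 w v \<in> line2 w u"
  then show "dot3 w u v = ezero" using proj_pt2_self unfolding line2_def by blast
next
  assume "dot3 w u v = ezero"
  then have "\<forall>x\<in>proj_pt2 w v. dot3 w u x = ezero"
    by (auto simp: dot3_smul3_right elim: proj_pt2E)
  then show "proj_pt2 w v \<in> line2 w u"
    using proj_pt2_in_PG2[OF assms] unfolding line2_def by blast
qed

lemma line2_smul3: "l \<noteq> ezero \<Longrightarrow> line2 w (smul3 w l u) = line2 w u"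
  by (auto simp: line2_def dot3_smul3_left)

text \<open>Two coordinate vectors of the same line are orthogonal to the same vectors, among them
  (u2, -u1, 0), (u3, 0, -u1) and (0, u3, -u2); this forces all 2x2 minors of the pair to vanish.\<close>
lemma line2_eq_iff:
  assumes u: "u \<noteq> zero3" and u': "u' \<noteq> zero3"
  shows "line2 w u' = line2 w u \<longleftrightarrow> u' \<in> proj_pt2 w u"
proof
  assume "u' \<in> proj_pt2 w u"
  then show "line2 w u' = line2 w u" by (auto elim: proj_pt2E simp: line2_smul3)
next
  assume eq: "line2 w u' = line2 w u"
  have orth: "dot3 w u' v = ezero" if "dot3 w u v = ezero" for v
  proof (cases "v = zero3")
    case False
    then show ?thesis using eq that proj_pt2_mem_line2_iff[OF False] by metis
  qed simp
  obtain u1 u2 u3 where uu: "u = (u1, u2, u3)" by (cases u rule: prod_cases3)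
  obtain p1 p2 p3 where pp: "u' = (p1, p2, p3)" by (cases u' rule: prod_cases3)
  have r1: "u1 \<otimes> p2 = p1 \<otimes> u2"
  proof -
    have "dot3 w u (u2, eneg u1, ezero) = ezero"
      unfolding uu by (simp add: ext_defs prod_eq_iff; algebra)
    moreover have "dot3 w u' (u2, eneg u1, ezero) = p1 \<otimes> u2 \<oplus> eneg (u1 \<otimes> p2)"
      unfolding pp by (simp add: ext_defs prod_eq_iff; algebra)
    ultimately show ?thesis using orth eadd_eneg_eq_zero_iff by metis
  qed
  have r2: "u1 \<otimes> p3 = p1 \<otimes> u3"
  proof -
    have "dot3 w u (u3, ezero, eneg u1) = ezero"
      unfolding uu by (simp add: ext_defs prod_eq_iff; algebra)
    moreover have "dot3 w u' (u3, ezero, eneg u1) = p1 \<otimes> u3 \<oplus> eneg (u1 \<otimes> p3)"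
      unfolding pp by (simp add: ext_defs prod_eq_iff; algebra)
    ultimately show ?thesis using orth eadd_eneg_eq_zero_iff by metis
  qed
  have r3: "u2 \<otimes> p3 = p2 \<otimes> u3"
  proof -
    have "dot3 w u (ezero, u3, eneg u2) = ezero"
      unfolding uu by (simp add: ext_defs prod_eq_iff; algebra)
    moreover have "dot3 w u' (ezero, u3, eneg u2) = p2 \<otimes> u3 \<oplus> eneg (u2 \<otimes> p3)"
      unfolding pp by (simp add: ext_defs prod_eq_iff; algebra)
    ultimately show ?thesis using orth eadd_eneg_eq_zero_iff by metis
  qed
  have nz: "\<not> (p1 = ezero \<and> p2 = ezero \<and> p3 = ezero)" using u' pp by (simp add: zero3_def)
  consider "u1 \<noteq> ezero" | "u2 \<noteq> ezero" | "u3 \<noteq> ezero" using u uu by (auto simp: zero3_def)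
  then show "u' \<in> proj_pt2 w u"
  proof cases
    case 1
    have "smul3 w u1 u' = smul3 w p1 u" using r1 r2 emul_commute[of u1 p1] by (simp add: uu pp)
    moreover have "p1 \<noteq> ezero" using r1 r2 1 nz by auto
    ultimately show ?thesis using 1 mem_proj_pt2_if_smul3_eq by blast
  next
    case 2
    have "smul3 w u2 u' = smul3 w p2 u"
      using r1 r3 emul_commute[of u2 p2] emul_commute[of u2 p1] emul_commute[of u1 p2]
      by (simp add: uu pp)
    moreover have "p2 \<noteq> ezero" using r1 r3 2 nz by (metis emul_eq_zero_iff)
    ultimately show ?thesis using 2 mem_proj_pt2_if_smul3_eq by blast
  next
    case 3
    have "smul3 w u3 u' = smul3 w p3 u"
      using r2 r3 emul_commute[of u3 p3] emul_commute[of u3 p1] emul_commute[of u1 p3]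
        emul_commute[of u3 p2] emul_commute[of u2 p3]
      by (simp add: uu pp)
    moreover have "p3 \<noteq> ezero" using r2 r3 3 nz by (metis emul_eq_zero_iff)
    ultimately show ?thesis using 3 mem_proj_pt2_if_smul3_eq by blast
  qed
qed

end

section \<open>Plane sections of the conic Y1^2 + \<alpha> Y2 Y3\<close>

fun swap23 :: "'b \<times> 'b \<times> 'b \<Rightarrow> 'b \<times> 'b \<times> 'b" where
  "swap23 (x, y, z) = (x, z, y)"

lemma bij_swap23: "bij swap23"
proof (rule involuntory_imp_bij)
  fix v :: "'b \<times> 'b \<times> 'b"
  show "swap23 (swap23 v) = v" by (cases v rule: prod_cases3) simp
qed

context quadratic_ext
begin

fun std_conic :: "'a ext \<Rightarrow> 'a ext \<times> 'a ext \<times> 'a ext \<Rightarrow> 'a ext" where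
  "std_conic \<alpha> (y1, y2, y3) = y1 \<otimes> y1 \<oplus> \<alpha> \<otimes> (y2 \<otimes> y3)"

text \<open>For z3 \<noteq> 0 the line is parametrised by (p1, p2) \<mapsto> (z3 p1, z3 p2, -(z1 p1 + z2 p2)), which turns
  the conic into a binary quadratic form of discriminant \<alpha>^2 (z1^2 + \<gamma> z2 z3).\<close>
lemma card_line_std_conic_z3:
  assumes z3: "z3 \<noteq> ezero" and \<alpha>: "\<alpha> \<noteq> ezero" and \<gamma>: "\<alpha> \<otimes> \<gamma> = (4, 0)"
  shows "card {y. y \<noteq> zero3 \<and> dot3 w (z1, z2, z3) y = ezero \<and> std_conic \<alpha> y = ezero}
           = (card (UNIV :: 'a ext set) - 1) * nsqrt (std_conic \<gamma> (z1, z2, z3))"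
proof -
  let ?Y = "{y. y \<noteq> zero3 \<and> dot3 w (z1, z2, z3) y = ezero \<and> std_conic \<alpha> y = ezero}"
  let ?B = "bq z3 (eneg (\<alpha> \<otimes> z1)) (eneg (\<alpha> \<otimes> z2))"
  let ?P = "{p. p \<noteq> (ezero, ezero) \<and> ?B p = ezero}"
  have "disc z3 (eneg (\<alpha> \<otimes> z1)) (eneg (\<alpha> \<otimes> z2))
      = (\<alpha> \<otimes> \<alpha>) \<otimes> (z1 \<otimes> z1) \<oplus> (\<alpha> \<otimes> (\<alpha> \<otimes> \<gamma>)) \<otimes> (z2 \<otimes> z3)"
    unfolding disc_def \<gamma> by (simp add: ext_defs prod_eq_iff; algebra)
  also have "\<dots> = (\<alpha> \<otimes> \<alpha>) \<otimes> std_conic \<gamma> (z1, z2, z3)"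
    by (simp add: ext_defs prod_eq_iff; algebra)
  finally have card_P: "card ?P = (card (UNIV :: 'a ext set) - 1) * nsqrt (std_conic \<gamma> (z1, z2, z3))"
    using card_bq_zeros[OF z3] nsqrt_scale[OF \<alpha>] by simp
  have "card ?Y \<le> card ?P"
  proof (rule card_inj_on_le)
    let ?f = "\<lambda>y. (fst y, fst (snd y))"
    show "inj_on ?f ?Y"
    proof (rule inj_onI)
      fix y y' assume y: "y \<in> ?Y" and y': "y' \<in> ?Y" and f: "?f y = ?f y'"
      obtain y1 y2 y3 where yy: "y = (y1, y2, y3)" by (cases y rule: prod_cases3)
      obtain y3' where yy': "y' = (y1, y2, y3')" using f yy by (cases y' rule: prod_cases3) simp
      have "dot3 w (z1, z2, z3) (y1, y2, y3) = dot3 w (z1, z2, z3) (y1, y2, y3')"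
        using y y' yy yy' by simp
      then have "z3 \<otimes> y3 = z3 \<otimes> y3'" by (simp add: eadd_left_cancel)
      then show "y = y'" using z3 emul_left_cancel yy yy' by simp
    qed
    show "?f ` ?Y \<subseteq> ?P"
    proof
      fix x assume "x \<in> ?f ` ?Y"
      then obtain y where y: "y \<in> ?Y" "x = ?f y" by blast
      obtain y1 y2 y3 where yy: "y = (y1, y2, y3)" by (cases y rule: prod_cases3)
      have "(y1, y2) \<noteq> (ezero, ezero)"
      proof
        assume "(y1, y2) = (ezero, ezero)"
        then have "z3 \<otimes> y3 = ezero" using y yy by simp
        then show False using y yy z3 \<open>(y1, y2) = (ezero, ezero)\<close> by (simp add: zero3_def)
      qed
      moreover have "?B (y1, y2) = z3 \<otimes> std_conic \<alpha> (y1, y2, y3)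
          \<oplus> eneg (\<alpha> \<otimes> (y2 \<otimes> dot3 w (z1, z2, z3) (y1, y2, y3)))"
        unfolding bq_def by (simp add: ext_defs prod_eq_iff; algebra)
      ultimately show "x \<in> ?P" using y yy by simp
    qed
  qed simp
  moreover have "card ?P \<le> card ?Y"
  proof (rule card_inj_on_le)
    let ?g = "\<lambda>p. (z3 \<otimes> fst p, z3 \<otimes> snd p, eneg (z1 \<otimes> fst p \<oplus> z2 \<otimes> snd p))"
    show "inj_on ?g ?P"
      using z3 emul_left_cancel by (auto simp: inj_on_def prod_eq_iff)
    show "?g ` ?P \<subseteq> ?Y"
    proof
      fix x assume "x \<in> ?g ` ?P"
      then obtain p where p: "p \<in> ?P" "x = ?g p" by blast
      obtain p1 p2 where pp: "p = (p1, p2)" by (cases p)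
      have "x \<noteq> zero3" using p pp z3 by (auto simp: zero3_def)
      moreover have "dot3 w (z1, z2, z3) x = ezero"
        unfolding p(2) pp by (simp add: ext_defs prod_eq_iff; algebra)
      moreover have "std_conic \<alpha> x = z3 \<otimes> ?B (p1, p2)"
        unfolding p(2) pp bq_def by (simp add: ext_defs prod_eq_iff; algebra)
      ultimately show "x \<in> ?Y" using p pp by simp
    qed
  qed simp
  ultimately show ?thesis using card_P by simp
qed

text \<open>Used with \<alpha> = 1 for the sections of the conic and with \<alpha> = 4 for the pencils of tangents.\<close>
lemma card_line_std_conic:
  assumes z: "z \<noteq> zero3" and \<alpha>: "\<alpha> \<noteq> ezero" and \<gamma>: "\<alpha> \<otimes> \<gamma> = (4, 0)"
  shows "card {y. y \<noteq> zero3 \<and> dot3 w z y = ezero \<and> std_conic \<alpha> y = ezero}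
           = (card (UNIV :: 'a ext set) - 1) * nsqrt (std_conic \<gamma> z)"
proof -
  obtain z1 z2 z3 where zz: "z = (z1, z2, z3)" by (cases z rule: prod_cases3)
  consider "z3 \<noteq> ezero" | "z3 = ezero" "z2 \<noteq> ezero" | "z3 = ezero" "z2 = ezero" "z1 \<noteq> ezero"
    using z zz by (auto simp: zero3_def)
  then show ?thesis
  proof cases
    case 1
    then show ?thesis unfolding zz using card_line_std_conic_z3 \<alpha> \<gamma> by blast
  next
    case 2
    have "{y. y \<noteq> zero3 \<and> dot3 w z y = ezero \<and> std_conic \<alpha> y = ezero}
        = {y. swap23 y \<noteq> zero3 \<and> dot3 w (z1, ezero, z2) (swap23 y) = ezero
              \<and> std_conic \<alpha> (swap23 y) = ezero}"
    proof (rule Collect_cong)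
      fix y :: "'a ext \<times> 'a ext \<times> 'a ext"
      obtain y1 y2 y3 where yy: "y = (y1, y2, y3)" by (cases y rule: prod_cases3)
      have "std_conic \<alpha> (swap23 y) = std_conic \<alpha> y"
        unfolding yy by (simp add: emul_commute)
      moreover have "dot3 w (z1, ezero, z2) (swap23 y) = dot3 w z y"
        unfolding yy zz 2(1) by (simp add: ext_defs prod_eq_iff; algebra)
      moreover have "swap23 y = zero3 \<longleftrightarrow> y = zero3"
        unfolding yy by (auto simp: zero3_def)
      ultimately show "(y \<noteq> zero3 \<and> dot3 w z y = ezero \<and> std_conic \<alpha> y = ezero) =
          (swap23 y \<noteq> zero3 \<and> dot3 w (z1, ezero, z2) (swap23 y) = ezero
            \<and> std_conic \<alpha> (swap23 y) = ezero)"
        by simp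
    qed
    also have "card \<dots> = card {y. y \<noteq> zero3 \<and> dot3 w (z1, ezero, z2) y = ezero \<and> std_conic \<alpha> y = ezero}"
      by (rule card_Collect_comp_bij[OF bij_swap23])
    also have "\<dots> = (card (UNIV :: 'a ext set) - 1) * nsqrt (std_conic \<gamma> (z1, ezero, z2))"
      by (rule card_line_std_conic_z3[OF 2(2) \<alpha> \<gamma>])
    finally show ?thesis using 2 zz by simp
  next
    case 3
    text \<open>The line Y1 = 0 meets the conic in the two points Y2 = 0 and Y3 = 0.\<close>
    let ?A = "(\<lambda>t. (ezero, t, ezero)) ` {t. t \<noteq> ezero} :: ('a ext \<times> 'a ext \<times> 'a ext) set"
    let ?B = "(\<lambda>t. (ezero, ezero, t)) ` {t. t \<noteq> ezero} :: ('a ext \<times> 'a ext \<times> 'a ext) set"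
    have "{y. y \<noteq> zero3 \<and> dot3 w z y = ezero \<and> std_conic \<alpha> y = ezero} = ?A \<union> ?B"
    proof (intro equalityI subsetI)
      fix y assume y: "y \<in> {y. y \<noteq> zero3 \<and> dot3 w z y = ezero \<and> std_conic \<alpha> y = ezero}"
      obtain y1 y2 y3 where yy: "y = (y1, y2, y3)" by (cases y rule: prod_cases3)
      have "y1 = ezero" using y yy zz 3 by simp
      moreover from this have "y2 = ezero \<or> y3 = ezero" using y yy \<alpha> by simp
      moreover have "\<not> (y1 = ezero \<and> y2 = ezero \<and> y3 = ezero)" using y yy by (auto simp: zero3_def)
      ultimately show "y \<in> ?A \<union> ?B" using yy by blast
    qed (use zz 3 in \<open>auto simp: zero3_def\<close>)
    moreover have "card ?A = card (UNIV :: 'a ext set) - 1" "card ?B = card (UNIV :: 'a ext set) - 1"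
      by (subst card_image; simp add: inj_on_def card_ext_nonzero)+
    moreover have disj: "?A \<inter> ?B = {}" by auto
    moreover have "nsqrt (std_conic \<gamma> z) = 2"
      using zz 3 nsqrt_square[of z1] by simp
    moreover have "card (?A \<union> ?B) = card ?A + card ?B"
      using disj by (simp add: card_Un_disjoint)
    ultimately show ?thesis by simp
  qed
qed

end

section \<open>Tangent lines of the conic\<close>

context quadratic_ext
begin

lemma four_nonzero: "(4::'a) \<noteq> 0"
  using two_nonzero mult_eq_0_iff[of "2::'a" 2] by simp

lemma conic_form_smul3:
  "conic_form w a b c d e (smul3 w l v) = (l \<otimes> l) \<otimes> conic_form w a b c d e v"
proof -
  obtain X Y Z where v: "v = (X, Y, Z)" by (cases v rule: prod_cases3)
  show ?thesis unfolding v conic_form_def by (simp add: ext_defs prod_eq_iff; algebra)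
qed

end

locale conic = quadratic_ext +
  fixes a b c e \<delta> :: "'a ext"
  assumes delta_square: "\<delta> \<otimes> \<delta> = eneg (b \<otimes> c) \<oplus> a \<oplus> b \<otimes> b \<otimes> e"
    and delta_nonzero: "\<delta> \<noteq> ezero"
begin

abbreviation Q :: "'a ext \<times> 'a ext \<times> 'a ext \<Rightarrow> 'a ext" where
  "Q \<equiv> conic_form w a b c (1, 0) e"

text \<open>Q(X, Y, Z) = (\<delta> X)^2 + (Y + (c - e b) X + e Z)(b X + Z), because \<delta>^2 = a - b c + b^2 e.\<close>
fun to_std :: "'a ext \<times> 'a ext \<times> 'a ext \<Rightarrow> 'a ext \<times> 'a ext \<times> 'a ext" where
  "to_std (X, Y, Z) = (\<delta> \<otimes> X, Y \<oplus> (c \<oplus> eneg (e \<otimes> b)) \<otimes> X \<oplus> e \<otimes> Z, b \<otimes> X \<oplus> Z)"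

text \<open>The contragredient of to_std, multiplied by \<delta>.\<close>
fun dual_to_std :: "'a ext \<times> 'a ext \<times> 'a ext \<Rightarrow> 'a ext \<times> 'a ext \<times> 'a ext" where
  "dual_to_std (u1, u2, u3) =
     (u1 \<oplus> eneg (b \<otimes> u3) \<oplus> eneg ((c \<oplus> eneg ((2, 0) \<otimes> (e \<otimes> b))) \<otimes> u2),
      \<delta> \<otimes> u2, \<delta> \<otimes> (u3 \<oplus> eneg (e \<otimes> u2)))"

lemma conic_form_to_std: "Q v = std_conic (1, 0) (to_std v)"
proof -
  obtain X Y Z where v: "v = (X, Y, Z)" by (cases v rule: prod_cases3)
  have "Q (X, Y, Z) = std_conic (1, 0) (to_std (X, Y, Z))
      \<oplus> (eneg (b \<otimes> c) \<oplus> a \<oplus> b \<otimes> b \<otimes> e \<oplus> eneg (\<delta> \<otimes> \<delta>)) \<otimes> (X \<otimes> X)"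
    unfolding conic_form_def by (simp add: ext_defs prod_eq_iff; algebra)
  moreover have "eneg (b \<otimes> c) \<oplus> a \<oplus> b \<otimes> b \<otimes> e \<oplus> eneg (\<delta> \<otimes> \<delta>) = ezero"
    using delta_square by (simp add: eadd_eneg_eq_zero_iff)
  ultimately show ?thesis unfolding v by simp
qed

lemma dot3_dual_to_std: "dot3 w (dual_to_std u) (to_std v) = \<delta> \<otimes> dot3 w u v"
proof -
  obtain u1 u2 u3 v1 v2 v3 where uv: "u = (u1, u2, u3)" "v = (v1, v2, v3)" by (metis prod_cases3)
  show ?thesis unfolding uv by (simp add: ext_defs prod_eq_iff; algebra)
qed

lemma dot3_dual_to_std_eq_zero_iff:
  "dot3 w (dual_to_std u) (to_std v) = ezero \<longleftrightarrow> dot3 w u v = ezero"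
  using delta_nonzero by (simp add: dot3_dual_to_std)

lemma inj_to_std: "inj to_std"
proof (rule injI)
  fix v v' assume h: "to_std v = to_std v'"
  obtain X Y Z where v: "v = (X, Y, Z)" by (cases v rule: prod_cases3)
  obtain X' Y' Z' where v': "v' = (X', Y', Z')" by (cases v' rule: prod_cases3)
  have "\<delta> \<otimes> X = \<delta> \<otimes> X'" using h v v' by simp
  then have X: "X = X'" using delta_nonzero emul_left_cancel by blast
  then have Z: "Z = Z'" using h v v' by (simp add: eadd_left_cancel)
  then have "Y = Y'" using h v v' X by (simp add: eadd_right_cancel)
  then show "v = v'" using v v' X Z by simp
qed

lemma inj_dual_to_std: "inj dual_to_std"
proof (rule injI)
  fix u u' assume h: "dual_to_std u = dual_to_std u'"
  obtain X Y Z where u: "u = (X, Y, Z)" by (cases u rule: prod_cases3)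
  obtain X' Y' Z' where u': "u' = (X', Y', Z')" by (cases u' rule: prod_cases3)
  have "\<delta> \<otimes> Y = \<delta> \<otimes> Y'" using h u u' by simp
  then have Y: "Y = Y'" using delta_nonzero emul_left_cancel by blast
  have "\<delta> \<otimes> (Z \<oplus> eneg (e \<otimes> Y)) = \<delta> \<otimes> (Z' \<oplus> eneg (e \<otimes> Y))" using h u u' Y by simp
  then have Z: "Z = Z'" using delta_nonzero by (simp add: emul_left_cancel eadd_right_cancel)
  then have "X = X'" using h u u' Y by (simp add: eadd_right_cancel)
  then show "u = u'" using u u' Y Z by simp
qed

lemma to_std_eq_zero_iff: "to_std v = zero3 \<longleftrightarrow> v = zero3"
  using inj_to_std[THEN injD, of v zero3] by (auto simp: zero3_def)

lemma dual_to_std_eq_zero_iff: "dual_to_std u = zero3 \<longleftrightarrow> u = zero3"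
  using inj_dual_to_std[THEN injD, of u zero3] by (auto simp: zero3_def)

lemma card_line_conic_vectors:
  assumes u: "u \<noteq> zero3"
  shows "card {y. y \<noteq> zero3 \<and> dot3 w u y = ezero \<and> Q y = ezero}
           = (card (UNIV :: 'a ext set) - 1) * nsqrt (std_conic (4, 0) (dual_to_std u))"
proof -
  let ?P = "\<lambda>x. x \<noteq> zero3 \<and> dot3 w (dual_to_std u) x = ezero \<and> std_conic (1, 0) x = ezero"
  have "card {y. y \<noteq> zero3 \<and> dot3 w u y = ezero \<and> Q y = ezero} = card {y. ?P (to_std y)}"
    by (simp add: dot3_dual_to_std_eq_zero_iff to_std_eq_zero_iff conic_form_to_std)
  also have "\<dots> = card {x. ?P x}"
    by (rule card_Collect_comp_bij[OF finite_inj_imp_bij[OF inj_to_std], of ?P])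
  also have "\<dots> = (card (UNIV :: 'a ext set) - 1) * nsqrt (std_conic (4, 0) (dual_to_std u))"
    by (rule card_line_std_conic) (simp_all add: u dual_to_std_eq_zero_iff)
  finally show ?thesis .
qed

lemma card_line_inter_conic:
  assumes u: "u \<noteq> zero3"
  shows "card (line2 w u \<inter> conic_pts w a b c (1, 0) e) = nsqrt (std_conic (4, 0) (dual_to_std u))"
proof -
  have "line2 w u \<inter> conic_pts w a b c (1, 0) e
      = {P \<in> PG2 w. \<forall>y\<in>P. dot3 w u y = ezero \<and> Q y = ezero}"
    unfolding line2_def conic_pts_def by blast
  moreover have "card {P \<in> PG2 w. \<forall>y\<in>P. dot3 w u y = ezero \<and> Q y = ezero} * (card (UNIV :: 'a ext set) - 1)
      = card {y. y \<noteq> zero3 \<and> dot3 w u y = ezero \<and> Q y = ezero}"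
    by (rule card_PG2_Collect) (simp add: dot3_smul3_right conic_form_smul3)
  ultimately show ?thesis
    using card_line_conic_vectors[OF u] card_units_pos by (simp add: mult.commute)
qed

lemma line2_tangent_iff:
  assumes "u \<noteq> zero3"
  shows "card (line2 w u \<inter> conic_pts w a b c (1, 0) e) = 1 \<longleftrightarrow> std_conic (4, 0) (dual_to_std u) = ezero"
  using card_line_inter_conic[OF assms] nsqrt_eq_1_iff by simp

lemma card_tangents_through_mult:
  assumes v: "v \<noteq> zero3"
  shows "card {L \<in> tangent_lines w a b c (1, 0) e. proj_pt2 w v \<in> L} * (card (UNIV :: 'a ext set) - 1)
           = card {u. u \<noteq> zero3 \<and> dot3 w u v = ezero \<and> std_conic (4, 0) (dual_to_std u) = ezero}"
proof -
  let ?U = "{u. u \<noteq> zero3 \<and> dot3 w u v = ezero \<and> std_conic (4, 0) (dual_to_std u) = ezero}"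
  have "{L \<in> tangent_lines w a b c (1, 0) e. proj_pt2 w v \<in> L} = line2 w ` ?U"
  proof (intro equalityI subsetI)
    fix L assume "L \<in> {L \<in> tangent_lines w a b c (1, 0) e. proj_pt2 w v \<in> L}"
    then obtain u where u: "u \<noteq> zero3" "L = line2 w u"
      and tangent: "card (L \<inter> conic_pts w a b c (1, 0) e) = 1" and vL: "proj_pt2 w v \<in> L"
      unfolding tangent_lines_def lines2_def by blast
    have "std_conic (4, 0) (dual_to_std u) = ezero" using tangent u line2_tangent_iff by simp
    moreover have "dot3 w u v = ezero" using vL u proj_pt2_mem_line2_iff[OF v] by simp
    ultimately show "L \<in> line2 w ` ?U" using u by blast
  next
    fix L assume "L \<in> line2 w ` ?U"
    then obtain u where u: "u \<in> ?U" "L = line2 w u" by blast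
    then have "L \<in> lines2 w" unfolding lines2_def by blast
    moreover have "card (L \<inter> conic_pts w a b c (1, 0) e) = 1" using u line2_tangent_iff by simp
    moreover have "proj_pt2 w v \<in> L" using u proj_pt2_mem_line2_iff[OF v] by simp
    ultimately show "L \<in> {L \<in> tangent_lines w a b c (1, 0) e. proj_pt2 w v \<in> L}"
      unfolding tangent_lines_def by blast
  qed
  moreover have "card (line2 w ` ?U) * (card (UNIV :: 'a ext set) - 1) = card ?U"
  proof (rule card_image_mult_fibre_card)
    fix u assume u: "u \<in> ?U"
    have "{u' \<in> ?U. line2 w u' = line2 w u} = proj_pt2 w u"
    proof (intro equalityI subsetI)
      fix x assume "x \<in> {u' \<in> ?U. line2 w u' = line2 w u}"
      then show "x \<in> proj_pt2 w u" using line2_eq_iff u by blast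
    next
      fix x assume "x \<in> proj_pt2 w u"
      then obtain l where l: "l \<noteq> ezero" "x = smul3 w l u" by (rule proj_pt2E)
      then have x: "x \<noteq> zero3" and lx: "line2 w x = line2 w u" using u by (simp_all add: line2_smul3)
      have "std_conic (4, 0) (dual_to_std x) = ezero"
        using line2_tangent_iff[OF x] line2_tangent_iff lx u by simp
      moreover have "dot3 w x v = ezero" using l u by (simp add: dot3_smul3_left)
      ultimately show "x \<in> {u' \<in> ?U. line2 w u' = line2 w u}" using x lx by blast
    qed
    then show "card {u' \<in> ?U. line2 w u' = line2 w u} = card (UNIV :: 'a ext set) - 1"
      using card_proj_pt2 u by simp
  qed simp
  ultimately show ?thesis by simp
qed

lemma card_tangent_vectors:
  assumes v: "v \<noteq> zero3"
  shows "card {u. u \<noteq> zero3 \<and> dot3 w u v = ezero \<and> std_conic (4, 0) (dual_to_std u) = ezero}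
           = (card (UNIV :: 'a ext set) - 1) * nsqrt (Q v)"
proof -
  let ?P = "\<lambda>z. z \<noteq> zero3 \<and> dot3 w (to_std v) z = ezero \<and> std_conic (4, 0) z = ezero"
  have "card {u. u \<noteq> zero3 \<and> dot3 w u v = ezero \<and> std_conic (4, 0) (dual_to_std u) = ezero}
      = card {u. ?P (dual_to_std u)}"
    by (simp add: dot3_commute[of "to_std v"] dot3_dual_to_std_eq_zero_iff dual_to_std_eq_zero_iff
        conj_commute)
  also have "\<dots> = card {z. ?P z}"
    by (rule card_Collect_comp_bij[OF finite_inj_imp_bij[OF inj_dual_to_std], of ?P])
  also have "\<dots> = (card (UNIV :: 'a ext set) - 1) * nsqrt (std_conic (1, 0) (to_std v))"
    by (rule card_line_std_conic) (simp_all add: v to_std_eq_zero_iff four_nonzero)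
  finally show ?thesis by (simp add: conic_form_to_std)
qed

theorem card_tangents_through:
  assumes v: "v \<noteq> zero3"
  shows "card {L \<in> tangent_lines w a b c (1, 0) e. proj_pt2 w v \<in> L} = nsqrt (Q v)"
  using card_tangents_through_mult[OF v] card_tangent_vectors[OF v] card_units_pos
  by (simp add: mult.commute)

end

fun emb :: "'a::zero \<times> 'a \<times> 'a \<Rightarrow> 'a ext \<times> 'a ext \<times> 'a ext" where
  "emb (x, y, z) = ((x, 0), (y, 0), (z, 0))"

fun scale3 :: "'a::times \<Rightarrow> 'a \<times> 'a \<times> 'a \<Rightarrow> 'a \<times> 'a \<times> 'a" where
  "scale3 l (x, y, z) = (l * x, l * y, l * z)"

lemma emb_scale3: "emb (scale3 l r) = smul3 w (l, 0) (emb r)"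
  by (cases r rule: prod_cases3) (simp add: emul_def)

lemma emb_eq_zero_iff: "emb r = zero3 \<longleftrightarrow> r = (0, 0, 0)"
  by (cases r rule: prod_cases3) (simp add: zero3_def ezero_def)

lemma scale3_eq_zero_iff: "scale3 l r = (0, 0, 0) \<longleftrightarrow> l = (0::'a::field) \<or> r = (0, 0, 0)"
  by (cases r rule: prod_cases3) auto

lemma inj_on_scale3: "r \<noteq> (0, 0, 0) \<Longrightarrow> inj_on (\<lambda>l. scale3 l r) {l :: 'a::field. l \<noteq> 0}"
  by (cases r rule: prod_cases3) (auto simp: inj_on_def)

lemma card_nonzero: "card {l :: 'a::{finite,zero}. l \<noteq> 0} = card (UNIV :: 'a set) - 1"
proof -
  have "{l :: 'a. l \<noteq> 0} = UNIV - {0}" by auto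
  then show ?thesis by (simp add: card_Diff_singleton)
qed

context quadratic_ext
begin

lemma proj_pt2_emb_eq_iff:
  assumes r: "r \<noteq> (0, 0, 0)" and r': "r' \<noteq> (0, 0, 0)"
  shows "proj_pt2 w (emb r') = proj_pt2 w (emb r) \<longleftrightarrow> (\<exists>l. l \<noteq> 0 \<and> r' = scale3 l r)"
proof
  assume "proj_pt2 w (emb r') = proj_pt2 w (emb r)"
  then have "emb r' \<in> proj_pt2 w (emb r)" using proj_pt2_self by metis
  then obtain l where l: "l \<noteq> ezero" "emb r' = smul3 w l (emb r)" by (rule proj_pt2E)
  obtain x y z where rr: "r = (x, y, z)" by (cases r rule: prod_cases3)
  obtain x' y' z' where rr': "r' = (x', y', z')" by (cases r' rule: prod_cases3)
  obtain l1 l2 where ll: "l = (l1, l2)" by (cases l)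
  have e: "x' = l1 * x" "y' = l1 * y" "z' = l1 * z" "l2 * x = 0" "l2 * y = 0" "l2 * z = 0"
    using l(2) rr rr' ll by (simp_all add: emul_def)
  have "l2 = 0" using e r rr by auto
  then have "l1 \<noteq> 0" using l(1) ll by simp
  then show "\<exists>l. l \<noteq> 0 \<and> r' = scale3 l r" using e rr rr' by auto
next
  assume "\<exists>l. l \<noteq> 0 \<and> r' = scale3 l r"
  then obtain l where l: "l \<noteq> 0" "r' = scale3 l r" by blast
  then have "emb r' \<in> proj_pt2 w (emb r)"
    using smul3_mem_proj_pt2[of "(l, 0)" "emb r"] by (simp add: emb_scale3[of l r w])
  then show "proj_pt2 w (emb r') = proj_pt2 w (emb r)" by (rule proj_pt2_eq)
qed

end

context conic
begin

lemma card_external_points_mult: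
  "card {P \<in> PG2 w. in_PG2_q P \<and> card {L \<in> tangent_lines w a b c (1, 0) e. P \<in> L} = 2}
     * (card (UNIV :: 'a set) - 1)
   = card {r. r \<noteq> (0, 0, 0) \<and> nsqrt (Q (emb r)) = 2}"
proof -
  let ?R = "{r. r \<noteq> (0, 0, 0) \<and> nsqrt (Q (emb r)) = 2}"
  let ?f = "\<lambda>r. proj_pt2 w (emb r)"
  have "{P \<in> PG2 w. in_PG2_q P \<and> card {L \<in> tangent_lines w a b c (1, 0) e. P \<in> L} = 2} = ?f ` ?R"
  proof (intro equalityI subsetI)
    fix P assume "P \<in> {P \<in> PG2 w. in_PG2_q P \<and> card {L \<in> tangent_lines w a b c (1, 0) e. P \<in> L} = 2}"
    then have P: "P \<in> PG2 w" "in_PG2_q P" "card {L \<in> tangent_lines w a b c (1, 0) e. P \<in> L} = 2"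
      by blast+
    obtain v where v: "v \<noteq> zero3" "P = proj_pt2 w v" using P(1) unfolding PG2_def by blast
    obtain x where x: "x \<in> P" "snd (fst x) = 0" "snd (fst (snd x)) = 0" "snd (snd (snd x)) = 0"
      using P(2) unfolding in_PG2_q_def by blast
    define r where "r = (fst (fst x), fst (fst (snd x)), fst (snd (snd x)))"
    have xr: "x = emb r" using x unfolding r_def by (cases x rule: prod_cases3) (simp add: prod_eq_iff)
    have x0: "x \<noteq> zero3" using x(1) v by (auto simp: mem_proj_pt2_iff)
    have Px: "P = proj_pt2 w x" using x(1) v proj_pt2_eq by metis
    have "nsqrt (Q x) = 2" using P(3) Px card_tangents_through[OF x0] by simp
    moreover have "r \<noteq> (0, 0, 0)" using x0 xr emb_eq_zero_iff by metis
    ultimately show "P \<in> ?f ` ?R" using Px xr by blast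
  next
    fix P assume "P \<in> ?f ` ?R"
    then obtain r where r: "r \<noteq> (0, 0, 0)" "nsqrt (Q (emb r)) = 2" "P = ?f r" by blast
    have r0: "emb r \<noteq> zero3" using r emb_eq_zero_iff by metis
    have "P \<in> PG2 w" using r proj_pt2_in_PG2[OF r0] by simp
    moreover have "in_PG2_q P"
      unfolding in_PG2_q_def r(3)
      by (rule bexI[OF _ proj_pt2_self]) (cases r rule: prod_cases3, simp)
    moreover have "card {L \<in> tangent_lines w a b c (1, 0) e. P \<in> L} = 2"
      using card_tangents_through[OF r0] r by simp
    ultimately show "P \<in> {P \<in> PG2 w. in_PG2_q P \<and> card {L \<in> tangent_lines w a b c (1, 0) e. P \<in> L} = 2}"
      by blast
  qed
  moreover have "card (?f ` ?R) * (card (UNIV :: 'a set) - 1) = card ?R"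
  proof (rule card_image_mult_fibre_card)
    fix r assume r: "r \<in> ?R"
    have "{r' \<in> ?R. ?f r' = ?f r} = (\<lambda>l. scale3 l r) ` {l. l \<noteq> 0}"
    proof (intro equalityI subsetI)
      fix r' assume "r' \<in> {r' \<in> ?R. ?f r' = ?f r}"
      then show "r' \<in> (\<lambda>l. scale3 l r) ` {l. l \<noteq> 0}" using proj_pt2_emb_eq_iff r by blast
    next
      fix r' assume "r' \<in> (\<lambda>l. scale3 l r) ` {l. l \<noteq> 0}"
      then obtain l where l: "l \<noteq> 0" "r' = scale3 l r" by blast
      then have r'0: "r' \<noteq> (0, 0, 0)" using r by (simp add: scale3_eq_zero_iff)
      have "Q (emb r') = ((l, 0) \<otimes> (l, 0)) \<otimes> Q (emb r)"
        using l by (simp add: emb_scale3[of l r w] conic_form_smul3)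
      then have "nsqrt (Q (emb r')) = 2" using nsqrt_scale[of "(l, 0)"] l r by simp
      moreover have "?f r' = ?f r" using proj_pt2_emb_eq_iff r r'0 l by blast
      ultimately show "r' \<in> {r' \<in> ?R. ?f r' = ?f r}" using r'0 by blast
    qed
    moreover have "card ((\<lambda>l. scale3 l r) ` {l. l \<noteq> 0}) = card {l :: 'a. l \<noteq> 0}"
      using r by (intro card_image inj_on_scale3) simp
    ultimately show "card {r' \<in> ?R. ?f r' = ?f r} = card (UNIV :: 'a set) - 1"
      by (simp add: card_nonzero)
  qed simp
  ultimately show ?thesis by simp
qed

end

fun scale4 :: "'a::times \<Rightarrow> 'a \<times> 'a \<times> 'a \<times> 'a \<Rightarrow> 'a \<times> 'a \<times> 'a \<times> 'a" where
  "scale4 l (t1, t2, x, z) = (l * t1, l * t2, l * x, l * z)"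

definition proj_pt3 :: "'a::field \<times> 'a \<times> 'a \<times> 'a \<Rightarrow> ('a \<times> 'a \<times> 'a \<times> 'a) set" where
  "proj_pt3 u = (\<lambda>l. scale4 l u) ` {l. l \<noteq> 0}"

lemma scale4_scale4: "scale4 l (scale4 m u) = scale4 (l * m) (u :: 'a::semigroup_mult \<times> 'a \<times> 'a \<times> 'a)"
  by (cases u rule: prod_cases4) (simp add: mult.assoc)

lemma scale4_eq_zero_iff: "scale4 l u = (0, 0, 0, 0) \<longleftrightarrow> l = (0::'a::field) \<or> u = (0, 0, 0, 0)"
  by (cases u rule: prod_cases4) auto

lemma proj_pt3_eq_Collect:
  "proj_pt3 (t1, t2, x, z) = {(l * t1, l * t2, l * x, l * z) | l. l \<noteq> 0}"
  unfolding proj_pt3_def by auto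

lemma PG3_eq: "PG3 = proj_pt3 ` {u. u \<noteq> (0, 0, 0, 0)}"
proof (intro equalityI subsetI)
  fix P assume "P \<in> PG3"
  then obtain t1 t2 x z where "(t1, t2, x, z) \<noteq> (0, 0, 0, 0)"
    and "P = proj_pt3 (t1, t2, x, z)"
    unfolding PG3_def proj_pt3_eq_Collect by blast
  then show "P \<in> proj_pt3 ` {u. u \<noteq> (0, 0, 0, 0)}" by blast
next
  fix P assume "P \<in> proj_pt3 ` {u. u \<noteq> (0, 0, 0, 0)}"
  then obtain u where u: "u \<noteq> (0, 0, 0, 0)" "P = proj_pt3 u" by blast
  obtain t1 t2 x z where "u = (t1, t2, x, z)" by (cases u rule: prod_cases4)
  then show "P \<in> PG3" unfolding PG3_def using u proj_pt3_eq_Collect by blast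
qed

lemma proj_pt3_self: "u \<in> proj_pt3 u"
  unfolding proj_pt3_def by (rule image_eqI[of _ _ 1]) (cases u rule: prod_cases4, simp_all)

lemma proj_pt3E:
  assumes "v \<in> proj_pt3 u"
  obtains l where "l \<noteq> 0" "v = scale4 l u"
  using assms unfolding proj_pt3_def by blast

lemma scale4_mem_proj_pt3: "l \<noteq> 0 \<Longrightarrow> scale4 l u \<in> proj_pt3 u"
  unfolding proj_pt3_def by blast

lemma proj_pt3_eq:
  assumes "v \<in> proj_pt3 u" shows "proj_pt3 v = proj_pt3 u"
proof -
  obtain l where l: "l \<noteq> 0" "v = scale4 l u" using assms by (rule proj_pt3E)
  show ?thesis
  proof (intro equalityI subsetI)
    fix x assume "x \<in> proj_pt3 v"
    then obtain m where "m \<noteq> 0" "x = scale4 m v" by (rule proj_pt3E)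
    then show "x \<in> proj_pt3 u" using l scale4_mem_proj_pt3[of "m * l" u] by (simp add: scale4_scale4)
  next
    fix x assume "x \<in> proj_pt3 u"
    then obtain m where m: "m \<noteq> 0" "x = scale4 m u" by (rule proj_pt3E)
    then have "x = scale4 (m / l) v" using l by (simp add: scale4_scale4)
    then show "x \<in> proj_pt3 v" using scale4_mem_proj_pt3[of "m / l" v] l m by simp
  qed
qed

lemma card_proj_pt3:
  fixes u :: "'a::{field,finite} \<times> 'a \<times> 'a \<times> 'a"
  assumes u: "u \<noteq> (0, 0, 0, 0)"
  shows "card (proj_pt3 u) = card (UNIV :: 'a set) - 1"
proof -
  have "inj_on (\<lambda>l. scale4 l u) {l :: 'a. l \<noteq> 0}"
    using u by (cases u rule: prod_cases4) (auto simp: inj_on_def)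
  then show ?thesis unfolding proj_pt3_def by (simp add: card_image card_nonzero)
qed

lemma card_PG3_Collect:
  fixes \<psi> :: "'a::{field,finite} \<times> 'a \<times> 'a \<times> 'a \<Rightarrow> bool"
  assumes inv: "\<And>l u. l \<noteq> 0 \<Longrightarrow> \<psi> (scale4 l u) = \<psi> u"
  shows "card {P \<in> PG3. \<forall>x\<in>P. \<psi> x} * (card (UNIV :: 'a set) - 1)
           = card {u. u \<noteq> (0, 0, 0, 0) \<and> \<psi> u}"
proof -
  let ?V = "{u. u \<noteq> (0, 0, 0, 0) \<and> \<psi> u}"
  have "{P \<in> PG3. \<forall>x\<in>P. \<psi> x} = proj_pt3 ` ?V"
  proof (intro equalityI subsetI)
    fix P assume P: "P \<in> {P \<in> PG3. \<forall>x\<in>P. \<psi> x}"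
    then obtain u where u: "u \<noteq> (0, 0, 0, 0)" "P = proj_pt3 u" unfolding PG3_eq by blast
    then have "\<psi> u" using P proj_pt3_self[of u] by blast
    then show "P \<in> proj_pt3 ` ?V" using u by blast
  next
    fix P assume "P \<in> proj_pt3 ` ?V"
    then obtain u where u: "u \<noteq> (0, 0, 0, 0)" "\<psi> u" "P = proj_pt3 u" by blast
    have "\<psi> x" if "x \<in> P" for x
      using that unfolding u(3) by (rule proj_pt3E) (use inv u(2) in simp)
    then show "P \<in> {P \<in> PG3. \<forall>x\<in>P. \<psi> x}" unfolding PG3_eq using u by blast
  qed
  moreover have "card (proj_pt3 ` ?V) * (card (UNIV :: 'a set) - 1) = card ?V"
  proof (rule card_image_mult_fibre_card)
    fix u assume u: "u \<in> ?V"
    have "{v \<in> ?V. proj_pt3 v = proj_pt3 u} = proj_pt3 u"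
    proof (intro equalityI subsetI)
      fix x assume "x \<in> {v \<in> ?V. proj_pt3 v = proj_pt3 u}"
      then have "proj_pt3 x = proj_pt3 u" by blast
      then show "x \<in> proj_pt3 u" using proj_pt3_self[of x] by simp
    next
      fix x assume x: "x \<in> proj_pt3 u"
      then obtain l where l: "l \<noteq> 0" "x = scale4 l u" by (rule proj_pt3E)
      then have "x \<noteq> (0, 0, 0, 0)" "\<psi> x" using u inv scale4_eq_zero_iff[of l u] by simp_all
      moreover have "proj_pt3 x = proj_pt3 u" using x by (rule proj_pt3_eq)
      ultimately show "x \<in> {v \<in> ?V. proj_pt3 v = proj_pt3 u}" by blast
    qed
    moreover have "u \<noteq> (0, 0, 0, 0)" using u by simp
    ultimately show "card {v \<in> ?V. proj_pt3 v = proj_pt3 u} = card (UNIV :: 'a set) - 1"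
      using card_proj_pt3 by simp
  qed simp
  ultimately show ?thesis by simp
qed

section \<open>The cubic surface\<close>

lemma surf_eq_scale: "surf_eq w a b c d e (l * t1) (l * t2) (l * X) (l * Z) = l ^ 3 * surf_eq w a b c d e t1 t2 X Z"
  unfolding surf_eq_def Let_def by algebra

context quadratic_ext
begin

lemma scalar_multiple_iff:
  assumes B: "B \<noteq> ezero"
  shows "(\<exists>Y. x = (Y, 0) \<otimes> B) \<longleftrightarrow> snd x * fst B = fst x * snd B"
proof
  assume "\<exists>Y. x = (Y, 0) \<otimes> B"
  then show "snd x * fst B = fst x * snd B" by (auto simp: emul_def)
next
  assume h: "snd x * fst B = fst x * snd B"
  define N where "N = fst B * fst B - w * (snd B * snd B)"
  have N: "N \<noteq> 0" using norm_nonzero[OF B] by (simp add: N_def)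
  have "(fst x * fst B - w * (snd x * snd B)) * fst B = fst x * N"
    using h unfolding N_def by algebra
  moreover have "(fst x * fst B - w * (snd x * snd B)) * snd B = snd x * N"
    using h unfolding N_def by algebra
  ultimately have "x = ((fst x * fst B - w * (snd x * snd B)) / N, 0) \<otimes> B"
    using N by (simp add: emul_def prod_eq_iff field_simps)
  then show "\<exists>Y. x = (Y, 0) \<otimes> B" ..
qed

end

context conic
begin

definition lin_coeff :: "'a \<Rightarrow> 'a \<Rightarrow> 'a ext" where
  "lin_coeff X Z = b \<otimes> (X, 0) \<oplus> (Z, 0)"

definition const_coeff :: "'a \<Rightarrow> 'a \<Rightarrow> 'a ext" where
  "const_coeff X Z = a \<otimes> (X * X, 0) \<oplus> c \<otimes> (X * Z, 0) \<oplus> e \<otimes> (Z * Z, 0)"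

lemma conic_form_emb: "Q (emb (X, Y, Z)) = (Y, 0) \<otimes> lin_coeff X Z \<oplus> const_coeff X Z"
  unfolding conic_form_def lin_coeff_def const_coeff_def by (simp add: ext_defs prod_eq_iff; algebra)

lemma lin_coeff_nonzero:
  assumes "snd b \<noteq> 0" and "(X, Z) \<noteq> (0, 0)" shows "lin_coeff X Z \<noteq> ezero"
  using assms by (auto simp: lin_coeff_def ext_defs)

text \<open>The surface equation says that (t1 + \<epsilon> t2)^2 - const_coeff X Z is an F_q-multiple of
  lin_coeff X Z, i.e. that (t1 + \<epsilon> t2)^2 is a value of Q on the line through (X, 0, Z) and (0, 1, 0).\<close>
lemma surf_eq_conic_form:
  "surf_eq w a b c (1, 0) e t1 t2 X Z
     = snd ((t1, t2) \<otimes> (t1, t2) \<oplus> eneg (const_coeff X Z)) * fst (lin_coeff X Z)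
       - fst ((t1, t2) \<otimes> (t1, t2) \<oplus> eneg (const_coeff X Z)) * snd (lin_coeff X Z)"
  unfolding surf_eq_def Let_def lin_coeff_def const_coeff_def by (simp add: ext_defs; algebra)

lemma surf_eq_zero_iff:
  assumes "snd b \<noteq> 0" and "(X, Z) \<noteq> (0, 0)"
  shows "surf_eq w a b c (1, 0) e t1 t2 X Z = 0 \<longleftrightarrow> (\<exists>Y. (t1, t2) \<otimes> (t1, t2) = Q (emb (X, Y, Z)))"
proof -
  have "(t1, t2) \<otimes> (t1, t2) = Q (emb (X, Y, Z))
      \<longleftrightarrow> (t1, t2) \<otimes> (t1, t2) \<oplus> eneg (const_coeff X Z) = (Y, 0) \<otimes> lin_coeff X Z" for Y
    unfolding conic_form_emb by (auto simp: ext_defs diff_eq_eq)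
  then show ?thesis
    using scalar_multiple_iff[OF lin_coeff_nonzero[OF assms]] surf_eq_conic_form by simp
qed

lemma conic_form_emb_inj:
  assumes "snd b \<noteq> 0" and "(X, Z) \<noteq> (0, 0)" and "Q (emb (X, Y, Z)) = Q (emb (X, Y', Z))"
  shows "Y = Y'"
proof -
  have "(Y, 0) \<otimes> lin_coeff X Z = (Y', 0) \<otimes> lin_coeff X Z"
    using assms(3) unfolding conic_form_emb by (simp add: eadd_right_cancel)
  then show ?thesis
    using emul_right_cancel[OF lin_coeff_nonzero[OF assms(1,2)]] by simp
qed



definition on_surface :: "'a \<times> 'a \<times> 'a \<times> 'a \<Rightarrow> bool" where
  "on_surface = (\<lambda>(t1, t2, X, Z). surf_eq w a b c (1, 0) e t1 t2 X Z = 0)"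

definition t_vanishes :: "'a \<times> 'a \<times> 'a \<times> 'a \<Rightarrow> bool" where
  "t_vanishes = (\<lambda>(t1, t2, X, Z). t1 = 0 \<and> t2 = 0)"

lemma on_surface_scale4: "l \<noteq> 0 \<Longrightarrow> on_surface (scale4 l u) = on_surface u"
  by (cases u rule: prod_cases4) (simp add: on_surface_def surf_eq_scale)

lemma t_vanishes_scale4: "l \<noteq> 0 \<Longrightarrow> t_vanishes (scale4 l u) = t_vanishes u"
  by (cases u rule: prod_cases4) (simp add: t_vanishes_def)

lemma card_surf_pts_mult:
  "card (surf_pts w a b c (1, 0) e) * (card (UNIV :: 'a set) - 1)
     = card {u. u \<noteq> (0, 0, 0, 0) \<and> on_surface u}"
  unfolding surf_pts_def on_surface_def[symmetric]
  by (rule card_PG3_Collect) (rule on_surface_scale4)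

lemma card_surf_pts0_mult:
  "card (surf_pts0 w a b c (1, 0) e) * (card (UNIV :: 'a set) - 1)
     = card {u. u \<noteq> (0, 0, 0, 0) \<and> on_surface u \<and> t_vanishes u}"
proof -
  have "surf_pts0 w a b c (1, 0) e = {P \<in> PG3. \<forall>u\<in>P. on_surface u \<and> t_vanishes u}"
    unfolding surf_pts0_def surf_pts_def on_surface_def t_vanishes_def by blast
  moreover have "card {P \<in> PG3. \<forall>u\<in>P. on_surface u \<and> t_vanishes u} * (card (UNIV :: 'a set) - 1)
      = card {u. u \<noteq> (0, 0, 0, 0) \<and> on_surface u \<and> t_vanishes u}"
    by (rule card_PG3_Collect) (simp add: on_surface_scale4 t_vanishes_scale4)
  ultimately show ?thesis by simp
qed

lemma card_XZ_line_vectors: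
  "card ({(t1, t2, X, Z). (t1, t2) \<noteq> (0, 0) \<and> X = 0 \<and> Z = 0} :: ('a \<times> 'a \<times> 'a \<times> 'a) set)
     = card (UNIV :: 'a set) * card (UNIV :: 'a set) - 1"
proof -
  let ?f = "\<lambda>(t1 :: 'a, t2 :: 'a). (t1, t2, 0 :: 'a, 0 :: 'a)"
  have "card ({(t1, t2, X, Z). (t1, t2) \<noteq> (0, 0) \<and> X = 0 \<and> Z = 0} :: ('a \<times> 'a \<times> 'a \<times> 'a) set)
      = card (?f ` (UNIV - {(0, 0)}))"
    by (rule arg_cong[where f = card]) auto
  also have "\<dots> = card (UNIV - {(0 :: 'a, 0 :: 'a)})"
    by (rule card_image) (auto simp: inj_on_def)
  also have "\<dots> = card (UNIV :: ('a \<times> 'a) set) - 1"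
    by (simp add: card_Diff_singleton)
  also have "card (UNIV :: ('a \<times> 'a) set) = card (UNIV :: 'a set) * card (UNIV :: 'a set)"
    using card_cartesian_product[of "UNIV :: 'a set" "UNIV :: 'a set"] by simp
  finally show ?thesis .
qed

lemma card_surface_vectors_generic:
  assumes b: "snd b \<noteq> 0"
  shows "card {(t1, t2, X, Z). (t1, t2) \<noteq> (0, 0) \<and> (X, Z) \<noteq> (0, 0)
                \<and> surf_eq w a b c (1, 0) e t1 t2 X Z = 0}
           = 2 * card {r. r \<noteq> (0, 0, 0) \<and> nsqrt (Q (emb r)) = 2}"
proof -
  let ?V = "{(t1, t2, X, Z). (t1, t2) \<noteq> (0, 0) \<and> (X, Z) \<noteq> (0, 0)
                \<and> surf_eq w a b c (1, 0) e t1 t2 X Z = 0}"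
  let ?R = "{r :: 'a \<times> 'a \<times> 'a. (fst r, snd (snd r)) \<noteq> (0, 0)}"
  let ?T = "\<lambda>r. {t. t \<noteq> ezero \<and> t \<otimes> t = Q (emb r)}"
  let ?h = "\<lambda>p :: ('a \<times> 'a \<times> 'a) \<times> 'a ext. (fst (snd p), snd (snd p), fst (fst p), snd (snd (fst p)))"
  have inj: "inj_on ?h (Sigma ?R ?T)"
  proof (rule inj_onI)
    fix p p' assume p: "p \<in> Sigma ?R ?T" and p': "p' \<in> Sigma ?R ?T" and h: "?h p = ?h p'"
    obtain X Y Z t where pp: "p = ((X, Y, Z), t)" by (metis prod_cases3 surj_pair)
    obtain X' Y' Z' t' where pp': "p' = ((X', Y', Z'), t')" by (metis prod_cases3 surj_pair)
    have eqs: "t' = t" "X' = X" "Z' = Z" using h pp pp' by (simp_all add: prod_eq_iff)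
    have "t \<otimes> t = Q (emb (X, Y, Z))" using p pp by simp
    moreover have "t \<otimes> t = Q (emb (X, Y', Z))" using p' pp' eqs by simp
    ultimately have "Q (emb (X, Y, Z)) = Q (emb (X, Y', Z))" by (rule subst)
    moreover have "(X, Z) \<noteq> (0, 0)" using p pp by simp
    ultimately have "Y = Y'" using conic_form_emb_inj[OF b] by blast
    then show "p = p'" using pp pp' eqs by simp
  qed
  have image: "?h ` Sigma ?R ?T = ?V"
  proof (intro equalityI subsetI)
    fix u assume "u \<in> ?h ` Sigma ?R ?T"
    then obtain p where p: "p \<in> Sigma ?R ?T" "u = ?h p" by blast
    obtain X Y Z t1 t2 where pp: "p = ((X, Y, Z), (t1, t2))" by (metis prod_cases3 surj_pair)
    have XZ: "(X, Z) \<noteq> (0, 0)" and t: "(t1, t2) \<noteq> (0, 0)"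
      and Q: "(t1, t2) \<otimes> (t1, t2) = Q (emb (X, Y, Z))"
      using p pp by (simp_all add: ezero_def)
    then have "surf_eq w a b c (1, 0) e t1 t2 X Z = 0" using surf_eq_zero_iff[OF b XZ] by blast
    then show "u \<in> ?V" using p(2) pp XZ t by simp
  next
    fix u assume uV: "u \<in> ?V"
    obtain t1 t2 X Z where u: "u = (t1, t2, X, Z)" by (cases u rule: prod_cases4)
    have t: "(t1, t2) \<noteq> (0, 0)" and XZ: "(X, Z) \<noteq> (0, 0)"
      and S: "surf_eq w a b c (1, 0) e t1 t2 X Z = 0"
      using uV unfolding u by simp_all
    obtain Y where "(t1, t2) \<otimes> (t1, t2) = Q (emb (X, Y, Z))"
      using surf_eq_zero_iff[OF b XZ] S by blast
    then have "((X, Y, Z), (t1, t2)) \<in> Sigma ?R ?T" using t XZ by (simp add: ezero_def)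
    moreover have "u = ?h ((X, Y, Z), (t1, t2))" using u by simp
    ultimately show "u \<in> ?h ` Sigma ?R ?T" by blast
  qed
  have "card ?V = card (Sigma ?R ?T)" unfolding image[symmetric] by (rule card_image[OF inj])
  also have "\<dots> = (\<Sum>r\<in>?R. card (?T r))" by (rule card_SigmaI) simp_all
  also have "\<dots> = (\<Sum>r\<in>?R. if nsqrt (Q (emb r)) = 2 then 2 else 0)"
    by (rule sum.cong) (simp_all add: card_nonzero_sqrts)
  also have "\<dots> = (\<Sum>r\<in>{r \<in> ?R. nsqrt (Q (emb r)) = 2}. 2)"
    by (rule sum.inter_filter[symmetric]) simp
  also have "{r \<in> ?R. nsqrt (Q (emb r)) = 2} = {r. r \<noteq> (0, 0, 0) \<and> nsqrt (Q (emb r)) = 2}"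
  proof (intro equalityI subsetI)
    fix r assume "r \<in> {r. r \<noteq> (0, 0, 0) \<and> nsqrt (Q (emb r)) = 2}"
    moreover obtain X Y Z where rr: "r = (X, Y, Z)" by (cases r rule: prod_cases3)
    moreover have "Q (emb (0, Y, 0)) = ezero"
      by (simp add: conic_form_def ext_defs)
    ultimately show "r \<in> {r \<in> ?R. nsqrt (Q (emb r)) = 2}" using nsqrt_zero by auto
  qed auto
  finally show ?thesis by simp
qed

lemma card_surface_vectors:
  assumes b: "snd b \<noteq> 0"
  shows "card {u. u \<noteq> (0, 0, 0, 0) \<and> on_surface u}
           = card {u. u \<noteq> (0, 0, 0, 0) \<and> on_surface u \<and> t_vanishes u}
             + (card (UNIV :: 'a set) * card (UNIV :: 'a set) - 1)
             + 2 * card {r. r \<noteq> (0, 0, 0) \<and> nsqrt (Q (emb r)) = 2}"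
proof -
  let ?V0 = "{u. u \<noteq> (0, 0, 0, 0) \<and> on_surface u \<and> t_vanishes u}"
  let ?V1 = "{(t1, t2, X, Z). (t1, t2) \<noteq> (0, 0) \<and> X = 0 \<and> Z = 0} :: ('a \<times> 'a \<times> 'a \<times> 'a) set"
  let ?V2 = "{(t1, t2, X, Z). (t1, t2) \<noteq> (0, 0) \<and> (X, Z) \<noteq> (0, 0)
                \<and> surf_eq w a b c (1, 0) e t1 t2 X Z = 0}"
  have "surf_eq w a b c (1, 0) e t1 t2 0 0 = 0" for t1 t2
    by (simp add: surf_eq_def)
  then have "{u. u \<noteq> (0, 0, 0, 0) \<and> on_surface u} = ?V0 \<union> (?V1 \<union> ?V2)"
    by (auto simp: on_surface_def t_vanishes_def)
  moreover have "?V0 \<inter> (?V1 \<union> ?V2) = {}" "?V1 \<inter> ?V2 = {}"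
    by (auto simp: t_vanishes_def)
  ultimately show ?thesis
    using card_XZ_line_vectors card_surface_vectors_generic[OF b] by (simp add: card_Un_disjoint)
qed

theorem card_surf_pts:
  assumes b: "snd b \<noteq> 0"
  shows "card (surf_pts w a b c (1, 0) e)
           = card (surf_pts0 w a b c (1, 0) e) + card (UNIV :: 'a set) + 1 + 2 * E_q w a b c (1, 0) e"
proof -
  define q where "q = card (UNIV :: 'a set)"
  define S where "S = card (surf_pts w a b c (1, 0) e)"
  define S0 where "S0 = card (surf_pts0 w a b c (1, 0) e)"
  define E where "E = E_q w a b c (1, 0) e"
  have "card {0 :: 'a, 1} \<le> q" unfolding q_def by (rule card_mono) simp_all
  then have q: "q - 1 \<noteq> 0" by simp
  have "S * (q - 1) = S0 * (q - 1) + (q * q - 1) + 2 * (E * (q - 1))"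
    unfolding S_def S0_def E_def q_def E_q_def
      card_surf_pts_mult card_surf_pts0_mult card_external_points_mult
    by (rule card_surface_vectors[OF b])
  also have "q * q - 1 = (q + 1) * (q - 1)"
    using q by (cases q) simp_all
  finally have "S * (q - 1) = (S0 + q + 1 + 2 * E) * (q - 1)"
    by (simp add: add_mult_distrib)
  then have "S = S0 + q + 1 + 2 * E" by (rule mult_right_cancel[OF q, THEN iffD1])
  then show ?thesis unfolding S_def S0_def E_def q_def .
qed

end

theorem mainTheorem9:
  fixes w :: "'a::{finite, field}" and a b c d e :: "'a ext"
  assumes q_odd: "odd (card (UNIV :: 'a set))"
    and w_nonsq: "\<not> (\<exists>x. x * x = w)"
    and nonsing: "conic_nonsingular w a b c d e"
    and d1: "d = (1, 0)"
    and b_notin: "snd b \<noteq> 0"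
    and sq: "eadd (eadd (eneg (emul w (emul w b c) d)) (emul w a (emul w d d)))
               (emul w (emul w b b) e) \<noteq> ezero"
    and sq2: "\<exists>s. emul w s s = eadd (eadd (eneg (emul w (emul w b c) d)) (emul w a (emul w d d)))
               (emul w (emul w b b) e)"
  shows "2 * int (E_q w a b c d e) =
           int (card (surf_pts w a b c d e)) - int (card (surf_pts0 w a b c d e))
           - int (card (UNIV :: 'a set)) - 1"
proof -
  interpret quadratic_ext w by unfold_locales (rule w_nonsq)
  obtain \<delta> where \<delta>: "\<delta> \<otimes> \<delta> = eneg (b \<otimes> c) \<oplus> a \<oplus> b \<otimes> b \<otimes> e"
    using sq2 d1 by auto
  then have "\<delta> \<noteq> ezero" using sq d1 by auto
  then interpret conic w a b c e \<delta> by unfold_locales (rule \<delta>)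
  show ?thesis using card_surf_pts[OF b_notin] d1 by simp
qed

end
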